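(* Let $n \geq 2^{17}$ be a power of $2$. Then in the Hilbert space $\mathbb{C}^n$ there exists a Kochen–Specker proof consisting of $N = 2^{n-1} + n^2/2$ projectors such that its orthogonality graph $G$ satisfies $$\theta(G) = \frac{2^{n-1}}{n} + \frac{n}{2}, \qquad \alpha(G) \leq \left(\frac{1}{2} + \frac{8\sqrt{n}\,\log n}{n-1}\right)\left(\frac{2^{n-1}}{n} + \frac{n}{2}\right).$$
   Context: A $\{0,1\}$-coloring of a finite set $S$ of unit vectors in $\mathbb{C}^n$ is a map $f: S \to \{0,1\}$ such that $\sum_{v \in O} f(v) \leq 1$ for every subset $O \subseteq S$ of mutually orthogonal vectors and $\sum_{v \in B} f(v) = 1$ for every subset $B \subseteq S$ forming an orthonormal basis of $\mathbb{C}^n$. A Kochen–Specker proof (KS set) is a finite set of unit vectors (equivalently rank-one projectors) in $\mathbb{C}^n$ admitting no $\{0,1\}$-coloring; the paper also counts as KS proofs the weak KS sets, i.e., finite sets $S$ of unit vectors such that for every $f: S\to\{0,1\}$ with $\sum_{v\in b} f(v) = 1$ for all orthonormal bases $b \subseteq S$ there exist two orthogonal $u_1, u_2 \in S$ with $f(u_1)=f(u_2)=1$. The orthogonality graph $G$ of $S$ has one vertex per vector (projector) and an edge between two vertices iff the corresponding vectors are orthogonal. $\alpha(G)$ is the independence number and $\theta(G)$ the Lovász theta number of $G$. $\log$ denotes the base-$2$ logarithm. *)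

theory Defs
  imports "HOL-Analysis.Analysis"
begin

definition cinner :: "complex ^ 'n \<Rightarrow> complex ^ 'n \<Rightarrow> complex" where
  "cinner x y = (\<Sum>i\<in>UNIV. x $ i * cnj (y $ i))"

definition corth :: "complex ^ 'n \<Rightarrow> complex ^ 'n \<Rightarrow> bool" where
  "corth x y \<longleftrightarrow> cinner x y = 0"

definition unit_vec :: "complex ^ 'n \<Rightarrow> bool" where
  "unit_vec v \<longleftrightarrow> cinner v v = 1"

definition mutually_orth :: "(complex ^ 'n) set \<Rightarrow> bool" where
  "mutually_orth O' \<longleftrightarrow> (\<forall>u\<in>O'. \<forall>v\<in>O'. u \<noteq> v \<longrightarrow> corth u v)"

definition onb :: "(complex ^ 'n) set \<Rightarrow> bool" where
  "onb B \<longleftrightarrow> (\<forall>v\<in>B. unit_vec v) \<and> mutually_orth B \<and> finite B \<and> card B = CARD('n)"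

definition zero_one_map :: "(complex ^ 'n) set \<Rightarrow> (complex ^ 'n \<Rightarrow> nat) \<Rightarrow> bool" where
  "zero_one_map S f \<longleftrightarrow> (\<forall>v\<in>S. f v \<in> {0, 1})"

definition coloring :: "(complex ^ 'n) set \<Rightarrow> (complex ^ 'n \<Rightarrow> nat) \<Rightarrow> bool" where
  "coloring S f \<longleftrightarrow> zero_one_map S f
     \<and> (\<forall>O'. O' \<subseteq> S \<and> mutually_orth O' \<longrightarrow> sum f O' \<le> 1)
     \<and> (\<forall>B. B \<subseteq> S \<and> onb B \<longrightarrow> sum f B = 1)"

definition KS_set :: "(complex ^ 'n) set \<Rightarrow> bool" where
  "KS_set S \<longleftrightarrow> finite S \<and> (\<forall>v\<in>S. unit_vec v) \<and> \<not> (\<exists>f. coloring S f)"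

definition weak_KS_set :: "(complex ^ 'n) set \<Rightarrow> bool" where
  "weak_KS_set S \<longleftrightarrow> finite S \<and> (\<forall>v\<in>S. unit_vec v) \<and>
     (\<forall>f. zero_one_map S f \<and> (\<forall>B. B \<subseteq> S \<and> onb B \<longrightarrow> sum f B = 1) \<longrightarrow>
        (\<exists>u1\<in>S. \<exists>u2\<in>S. corth u1 u2 \<and> f u1 = 1 \<and> f u2 = 1))"

definition KS_proof :: "(complex ^ 'n) set \<Rightarrow> bool" where
  "KS_proof S \<longleftrightarrow> KS_set S \<or> weak_KS_set S"

text \<open>Distinct vectors of S give distinct rank-one projectors (no two are phase multiples).\<close>
definition distinct_projectors :: "(complex ^ 'n) set \<Rightarrow> bool" where
  "distinct_projectors S \<longleftrightarrow> (\<forall>u\<in>S. \<forall>v\<in>S. \<forall>c::complex. u = c *s v \<longrightarrow> u = v)"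

definition indep_number :: "'v set \<Rightarrow> ('v \<Rightarrow> 'v \<Rightarrow> bool) \<Rightarrow> nat" where
  "indep_number V E = Max {card I | I. I \<subseteq> V \<and> (\<forall>u\<in>I. \<forall>v\<in>I. \<not> E u v)}"

text \<open>Lovasz theta via its standard SDP:
  max sum_{ij} X_ij over real symmetric PSD X on V with trace 1 and X_ij = 0 on edges.\<close>
definition lovasz_theta :: "'v set \<Rightarrow> ('v \<Rightarrow> 'v \<Rightarrow> bool) \<Rightarrow> real" where
  "lovasz_theta V E = Sup {(\<Sum>i\<in>V. \<Sum>j\<in>V. X i j) | X.
      (\<forall>i\<in>V. \<forall>j\<in>V. X i j = X j i)
    \<and> (\<forall>z. (\<Sum>i\<in>V. \<Sum>j\<in>V. z i * X i j * z j) \<ge> 0)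
    \<and> (\<Sum>i\<in>V. X i i) = 1
    \<and> (\<forall>i\<in>V. \<forall>j\<in>V. E i j \<longrightarrow> X i j = 0)}"

text \<open>Orthogonality graph edge relation (on unit vectors, orthogonal implies distinct).\<close>
definition orth_edge :: "complex ^ 'n \<Rightarrow> complex ^ 'n \<Rightarrow> bool" where
  "orth_edge u v \<longleftrightarrow> u \<noteq> v \<and> corth u v"

end

theory Submission
  imports Defs "HOL-Library.Nat_Bijection"
begin

text \<open>All vectors are real. Cabello's 18 vectors \<open>T\<close> of \<open>\<real>^4\<close> lie in 9 orthonormal bases, each vector
  in exactly two of them. So no assignment of naturals has sum 1 on every basis (the total would be
  both 9 and even), at most 4 of the vectors are pairwise non-orthogonal, they form a tight frame
  with constant 9/2, and the bases with weight 1/2 cover them fractionally with total weight 9/2.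
  Kronecker products multiply these constants and preserve uncolorability.

  If a configuration \<open>A\<close> is a tight frame with constant \<open>W\<close> and has such a cover of weight \<open>W\<close>, then
  \<open>(x\<bullet>y)\<^sup>2 / |A|\<close> is feasible for the theta SDP with value \<open>W\<close>, while the cover bounds every feasible
  value by \<open>W\<close>; so the theta number is \<open>W\<close>, and \<open>|A| = W n\<close>.

  In dimension \<open>n = 2^k\<close> take \<open>T^{\<otimes>8} \<otimes> E \<otimes> P\<^sub>a \<union> E' \<otimes> P\<^sub>r\<close>, where \<open>E, E'\<close> are standard bases and \<open>P\<^sub>t\<close>
  consists of \<open>t\<close> rotated orthonormal bases of the plane. Its weight \<open>(9/2)^8 a + r\<close> can be made
  \<open>2^(n-1)/n + n/2\<close>, while its independence number \<open>4^8 a + r\<close> is at most half of that, which is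
  stronger than the bound claimed.\<close>

section \<open>Finitely supported real vectors and Kronecker products\<close>

text \<open>A vector of \<open>\<real>^d\<close> is a function \<open>nat \<Rightarrow> real\<close> vanishing from index \<open>d\<close> on.\<close>

definition dot :: "nat \<Rightarrow> (nat \<Rightarrow> real) \<Rightarrow> (nat \<Rightarrow> real) \<Rightarrow> real" where
  "dot d x y = (\<Sum>i<d. x i * y i)"

definition supported :: "nat \<Rightarrow> (nat \<Rightarrow> real) \<Rightarrow> bool" where
  "supported d x \<longleftrightarrow> (\<forall>i\<ge>d. x i = 0)"

definition kron :: "nat \<Rightarrow> (nat \<Rightarrow> real) \<Rightarrow> (nat \<Rightarrow> real) \<Rightarrow> (nat \<Rightarrow> real)" where
  "kron b x y = (\<lambda>i. x (i div b) * y (i mod b))"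

definition kron_set :: "nat \<Rightarrow> (nat \<Rightarrow> real) set \<Rightarrow> (nat \<Rightarrow> real) set \<Rightarrow> (nat \<Rightarrow> real) set" where
  "kron_set b A B = (\<lambda>(x, y). kron b x y) ` (A \<times> B)"

lemma kron_setI: "x \<in> A \<Longrightarrow> y \<in> B \<Longrightarrow> kron b x y \<in> kron_set b A B"
  unfolding kron_set_def by auto

lemma kron_setE:
  assumes "z \<in> kron_set b A B"
  obtains x y where "x \<in> A" "y \<in> B" "z = kron b x y"
  using assms unfolding kron_set_def by auto

lemma kron_set_mono: "A \<subseteq> A' \<Longrightarrow> B \<subseteq> B' \<Longrightarrow> kron_set b A B \<subseteq> kron_set b A' B'"
  unfolding kron_set_def by auto

lemma dot_commute: "dot d x y = dot d y x"
  unfolding dot_def by (simp add: mult.commute)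

lemma sum_lessThan_mult_div_mod:
  fixes b :: nat
  assumes "0 < b"
  shows "(\<Sum>i<a*b. f (i div b) (i mod b)) = (\<Sum>p<a. \<Sum>q<b. f p q)"
proof -
  have "(\<Sum>i<a*b. f (i div b) (i mod b)) = (\<Sum>p<a. \<Sum>i\<in>{p*b..<p*b+b}. f (i div b) (i mod b))"
    by (rule sum.nat_group[symmetric])
  also have "\<dots> = (\<Sum>p<a. \<Sum>q<b. f p q)"
  proof (rule sum.cong[OF refl])
    fix p
    have "(\<Sum>i\<in>{p*b..<p*b+b}. f (i div b) (i mod b))
        = (\<Sum>q\<in>{0..<b}. f ((q + p*b) div b) ((q + p*b) mod b))"
      using sum.shift_bounds_nat_ivl[of "\<lambda>i. f (i div b) (i mod b)" 0 "p*b" b]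
      by (simp add: add.commute)
    also have "\<dots> = (\<Sum>q<b. f p q)"
      using assms by (intro sum.cong) auto
    finally show "(\<Sum>i\<in>{p*b..<p*b+b}. f (i div b) (i mod b)) = (\<Sum>q<b. f p q)" .
  qed
  finally show ?thesis .
qed

lemma dot_kron:
  assumes "0 < b"
  shows "dot (a*b) (kron b x y) (kron b x' y') = dot a x x' * dot b y y'"
proof -
  have "dot (a*b) (kron b x y) (kron b x' y') = (\<Sum>p<a. \<Sum>q<b. (x p * x' p) * (y q * y' q))"
    unfolding dot_def kron_def
    using sum_lessThan_mult_div_mod[OF assms, of "\<lambda>p q. (x p * x' p) * (y q * y' q)" a]
    by (simp add: algebra_simps)
  also have "\<dots> = dot a x x' * dot b y y'"
    unfolding dot_def by (simp add: sum_product)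
  finally show ?thesis .
qed

lemma supported_kron:
  assumes "0 < b" "supported a x"
  shows "supported (a*b) (kron b x y)"
  unfolding supported_def kron_def
proof (intro allI impI)
  fix i assume "a * b \<le> i"
  then have "a \<le> i div b"
    using div_le_mono[OF \<open>a * b \<le> i\<close>, of b] assms(1) by simp
  then show "x (i div b) * y (i mod b) = 0"
    using assms(2) unfolding supported_def by simp
qed

lemma dot_self_eq_1_imp_nonzero:
  assumes "dot d x x = 1"
  obtains i where "i < d" "x i \<noteq> 0"
proof (rule ccontr)
  assume "\<not> thesis"
  then have "\<forall>i<d. x i = 0" using that by blast
  then have "dot d x x = 0" unfolding dot_def by simp
  with assms show False by simp
qed

lemma kron_proportional_left:
  assumes b: "0 < b" and "dot b y y = 1" and eq: "kron b x y = (\<lambda>i. c * kron b x' y' i)"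
  shows "\<exists>e. x = (\<lambda>p. e * x' p)"
proof -
  obtain q where q: "q < b" "y q \<noteq> 0" using dot_self_eq_1_imp_nonzero assms(2) by blast
  have "x p = (c * y' q / y q) * x' p" for p
  proof -
    have "kron b x y (p*b + q) = c * kron b x' y' (p*b + q)" using eq by metis
    moreover have "(p*b + q) div b = p" "(p*b + q) mod b = q" using q b by auto
    ultimately have "x p * y q = c * (x' p * y' q)" unfolding kron_def by simp
    then show ?thesis using q(2) by (simp add: field_simps)
  qed
  then show ?thesis by blast
qed

lemma kron_proportional_right:
  assumes b: "0 < b" and "supported b y" "supported b y'" and "dot a x x = 1"
    and eq: "kron b x y = (\<lambda>i. c * kron b x' y' i)"
  shows "\<exists>e. y = (\<lambda>q. e * y' q)"
proof -
  obtain p where p: "p < a" "x p \<noteq> 0" using dot_self_eq_1_imp_nonzero assms(4) by blast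
  have "y q = (c * x' p / x p) * y' q" for q
  proof (cases "q < b")
    case True
    have "kron b x y (p*b + q) = c * kron b x' y' (p*b + q)" using eq by metis
    moreover have "(p*b + q) div b = p" "(p*b + q) mod b = q" using True b by auto
    ultimately have "x p * y q = c * (x' p * y' q)" unfolding kron_def by simp
    then show ?thesis using p(2) by (simp add: field_simps)
  next
    case False
    then show ?thesis using assms(2,3) unfolding supported_def by simp
  qed
  then show ?thesis by blast
qed

section \<open>Configurations of unit rays\<close>

text \<open>No two vectors of a set of \<open>unit_rays\<close> span the same line, so they give distinct projectors.
  \<open>tight_frame d A w\<close> says \<open>\<Sum>x\<in>A. x x\<^sup>T = w I\<close>; \<open>orth_cover d A w\<close> is a fractional cover of \<open>A\<close>, of total
  weight \<open>w\<close>, by cliques of its orthogonality graph.\<close>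

definition unit_rays :: "nat \<Rightarrow> (nat \<Rightarrow> real) set \<Rightarrow> bool" where
  "unit_rays d A \<longleftrightarrow> finite A \<and> (\<forall>x\<in>A. supported d x \<and> dot d x x = 1)
     \<and> (\<forall>x\<in>A. \<forall>y\<in>A. \<forall>c. x = (\<lambda>i. c * y i) \<longrightarrow> x = y)"

definition tight_frame :: "nat \<Rightarrow> (nat \<Rightarrow> real) set \<Rightarrow> real \<Rightarrow> bool" where
  "tight_frame d A w \<longleftrightarrow> (\<forall>i<d. \<forall>j<d. (\<Sum>x\<in>A. x i * x j) = (if i = j then w else 0))"

definition pairwise_orth :: "nat \<Rightarrow> (nat \<Rightarrow> real) set \<Rightarrow> bool" where
  "pairwise_orth d C \<longleftrightarrow> (\<forall>x\<in>C. \<forall>y\<in>C. x \<noteq> y \<longrightarrow> dot d x y = 0)"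

definition pairwise_nonorth :: "nat \<Rightarrow> (nat \<Rightarrow> real) set \<Rightarrow> bool" where
  "pairwise_nonorth d I \<longleftrightarrow> (\<forall>x\<in>I. \<forall>y\<in>I. x \<noteq> y \<longrightarrow> dot d x y \<noteq> 0)"

definition indep_le :: "nat \<Rightarrow> (nat \<Rightarrow> real) set \<Rightarrow> nat \<Rightarrow> bool" where
  "indep_le d A m \<longleftrightarrow> (\<forall>I. I \<subseteq> A \<and> pairwise_nonorth d I \<longrightarrow> card I \<le> m)"

definition basis_in :: "nat \<Rightarrow> (nat \<Rightarrow> real) set \<Rightarrow> (nat \<Rightarrow> real) set \<Rightarrow> bool" where
  "basis_in d A C \<longleftrightarrow> C \<subseteq> A \<and> pairwise_orth d C \<and> card C = d"

definition has_basis_in :: "nat \<Rightarrow> (nat \<Rightarrow> real) set \<Rightarrow> bool" where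
  "has_basis_in d A \<longleftrightarrow> (\<exists>C. basis_in d A C)"

definition KS_uncolorable :: "nat \<Rightarrow> (nat \<Rightarrow> real) set \<Rightarrow> bool" where
  "KS_uncolorable d A \<longleftrightarrow> \<not> (\<exists>g :: (nat \<Rightarrow> real) \<Rightarrow> nat. \<forall>C. basis_in d A C \<longrightarrow> sum g C = 1)"

definition orth_cover :: "nat \<Rightarrow> (nat \<Rightarrow> real) set \<Rightarrow> real \<Rightarrow> bool" where
  "orth_cover d A w \<longleftrightarrow> (\<exists>(K :: nat set) cl wt. finite K
     \<and> (\<forall>k\<in>K. cl k \<subseteq> A \<and> pairwise_orth d (cl k) \<and> 0 \<le> wt k)
     \<and> (\<forall>x\<in>A. (\<Sum>k\<in>{k\<in>K. x \<in> cl k}. wt k) = 1) \<and> (\<Sum>k\<in>K. wt k) = w)"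

lemma unit_rays_finite: "unit_rays d A \<Longrightarrow> finite A"
  by (simp add: unit_rays_def)

lemma unit_rays_supported: "unit_rays d A \<Longrightarrow> x \<in> A \<Longrightarrow> supported d x"
  by (simp add: unit_rays_def)

lemma unit_rays_dot_self: "unit_rays d A \<Longrightarrow> x \<in> A \<Longrightarrow> dot d x x = 1"
  by (simp add: unit_rays_def)

lemma unit_rays_proportional_eq:
  "unit_rays d A \<Longrightarrow> x \<in> A \<Longrightarrow> y \<in> A \<Longrightarrow> x = (\<lambda>i. c * y i) \<Longrightarrow> x = y"
  by (simp add: unit_rays_def)

lemma unit_rays_subset: "unit_rays d A \<Longrightarrow> C \<subseteq> A \<Longrightarrow> unit_rays d C"
  unfolding unit_rays_def using finite_subset by blast

lemma pairwise_nonorth_subset: "pairwise_nonorth d I \<Longrightarrow> J \<subseteq> I \<Longrightarrow> pairwise_nonorth d J"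
  unfolding pairwise_nonorth_def by blast

lemma KS_uncolorable_mono: "KS_uncolorable d A \<Longrightarrow> A \<subseteq> A' \<Longrightarrow> KS_uncolorable d A'"
  unfolding KS_uncolorable_def basis_in_def by blast

lemma card_tight_frame:
  assumes A: "unit_rays d A" and f: "tight_frame d A w"
  shows "real (card A) = w * real d"
proof -
  have "real (card A) = (\<Sum>x\<in>A. dot d x x)" using A by (simp add: unit_rays_def)
  also have "\<dots> = (\<Sum>i<d. \<Sum>x\<in>A. x i * x i)" unfolding dot_def by (rule sum.swap)
  also have "\<dots> = (\<Sum>i<d. w)" using f unfolding tight_frame_def by simp
  finally show ?thesis by simp
qed

lemma indep_le_card_cover:
  assumes fin: "finite K" and cov: "A \<subseteq> (\<Union>k\<in>K. cl k)"
    and orth: "\<And>k. k \<in> K \<Longrightarrow> pairwise_orth d (cl k)"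
  shows "indep_le d A (card K)"
  unfolding indep_le_def
proof (intro allI impI)
  fix I assume I: "I \<subseteq> A \<and> pairwise_nonorth d I"
  have le1: "card (I \<inter> cl k) \<le> 1" and fin_k: "finite (I \<inter> cl k)" if "k \<in> K" for k
  proof -
    have "x = y" if "x \<in> I \<inter> cl k" "y \<in> I \<inter> cl k" for x y
      using I orth[OF \<open>k \<in> K\<close>] that unfolding pairwise_nonorth_def pairwise_orth_def by blast
    then obtain z where "I \<inter> cl k \<subseteq> {z}" by blast
    then show "card (I \<inter> cl k) \<le> 1" "finite (I \<inter> cl k)"
      using card_mono[of "{z}" "I \<inter> cl k"] finite_subset by auto
  qed
  have "I \<subseteq> (\<Union>k\<in>K. I \<inter> cl k)" using I cov by blast
  then have "card I \<le> card (\<Union>k\<in>K. I \<inter> cl k)"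
    using fin fin_k by (intro card_mono finite_UN_I)
  also have "\<dots> \<le> (\<Sum>k\<in>K. card (I \<inter> cl k))" by (rule card_UN_le[OF fin])
  also have "\<dots> \<le> (\<Sum>k\<in>K. 1)" by (rule sum_mono) (rule le1)
  finally show "card I \<le> card K" by simp
qed

lemma unit_rays_Un:
  assumes A: "unit_rays d A" and A': "unit_rays d A'"
    and not_prop: "\<And>x y c. x \<in> A \<Longrightarrow> y \<in> A' \<Longrightarrow> x \<noteq> (\<lambda>i. c * y i)"
    and not_prop': "\<And>x y c. x \<in> A' \<Longrightarrow> y \<in> A \<Longrightarrow> x \<noteq> (\<lambda>i. c * y i)"
  shows "unit_rays d (A \<union> A')"
proof -
  have "x = y" if "x \<in> A \<union> A'" "y \<in> A \<union> A'" "x = (\<lambda>i. c * y i)" for x y c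
    using that A A' not_prop not_prop' unfolding unit_rays_def by blast
  then show ?thesis using A A' unfolding unit_rays_def by auto
qed

lemma tight_frame_Un:
  assumes "finite A" "finite A'" "A \<inter> A' = {}" "tight_frame d A w" "tight_frame d A' w'"
  shows "tight_frame d (A \<union> A') (w + w')"
  unfolding tight_frame_def
proof (intro allI impI)
  fix i j assume "i < d" "j < d"
  have "(\<Sum>x\<in>A \<union> A'. x i * x j) = (\<Sum>x\<in>A. x i * x j) + (\<Sum>x\<in>A'. x i * x j)"
    using assms(1-3) by (rule sum.union_disjoint)
  then show "(\<Sum>x\<in>A \<union> A'. x i * x j) = (if i = j then w + w' else 0)"
    using assms(4,5) \<open>i < d\<close> \<open>j < d\<close> unfolding tight_frame_def by simp
qed

lemma indep_le_Un:
  assumes "indep_le d A p" "indep_le d A' q"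
  shows "indep_le d (A \<union> A') (p + q)"
  unfolding indep_le_def
proof (intro allI impI)
  fix I assume I: "I \<subseteq> A \<union> A' \<and> pairwise_nonorth d I"
  have "card (I \<inter> A) \<le> p"
    using assms(1) I pairwise_nonorth_subset[of d I "I \<inter> A"] unfolding indep_le_def by blast
  moreover have "card (I \<inter> A') \<le> q"
    using assms(2) I pairwise_nonorth_subset[of d I "I \<inter> A'"] unfolding indep_le_def by blast
  moreover have "I = (I \<inter> A) \<union> (I \<inter> A')" using I by blast
  then have "card I \<le> card (I \<inter> A) + card (I \<inter> A')" by (metis card_Un_le)
  ultimately show "card I \<le> p + q" by simp
qed

lemma orth_cover_Un:
  assumes disj: "A \<inter> A' = {}" and cA: "orth_cover d A w" and cA': "orth_cover d A' w'"
  shows "orth_cover d (A \<union> A') (w + w')"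
proof -
  obtain K1 :: "nat set" and cl1 and wt1 :: "nat \<Rightarrow> real"
    where c1: "finite K1" "\<forall>k\<in>K1. cl1 k \<subseteq> A \<and> pairwise_orth d (cl1 k) \<and> 0 \<le> wt1 k"
      "\<forall>x\<in>A. (\<Sum>k\<in>{k\<in>K1. x \<in> cl1 k}. wt1 k) = 1" "(\<Sum>k\<in>K1. wt1 k) = w"
    using cA unfolding orth_cover_def by blast
  obtain K2 :: "nat set" and cl2 and wt2 :: "nat \<Rightarrow> real"
    where c2: "finite K2" "\<forall>k\<in>K2. cl2 k \<subseteq> A' \<and> pairwise_orth d (cl2 k) \<and> 0 \<le> wt2 k"
      "\<forall>x\<in>A'. (\<Sum>k\<in>{k\<in>K2. x \<in> cl2 k}. wt2 k) = 1" "(\<Sum>k\<in>K2. wt2 k) = w'"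
    using cA' unfolding orth_cover_def by blast
  define K where "K = (\<lambda>k. 2*k) ` K1 \<union> (\<lambda>k. 2*k+1) ` K2"
  define cl where "cl k = (if even k then cl1 (k div 2) else cl2 (k div 2))" for k
  define wt where "wt k = (if even k then wt1 (k div 2) else wt2 (k div 2))" for k
  have inj1: "inj_on (\<lambda>k::nat. 2*k) X" and inj2: "inj_on (\<lambda>k::nat. 2*k+1) X" for X
    by (auto simp: inj_on_def)
  have dj: "(\<lambda>k::nat. 2*k) ` X \<inter> (\<lambda>k. 2*k+1) ` Y = {}" for X Y by auto presburger
  have s1: "(\<Sum>k\<in>(\<lambda>k. 2*k) ` X. wt k) = (\<Sum>k\<in>X. wt1 k)" for X
    by (subst sum.reindex[OF inj1]) (simp add: wt_def)
  have s2: "(\<Sum>k\<in>(\<lambda>k. 2*k+1) ` X. wt k) = (\<Sum>k\<in>X. wt2 k)" for X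
    by (subst sum.reindex[OF inj2]) (simp add: wt_def)
  have "finite K" unfolding K_def using c1(1) c2(1) by simp
  moreover have "\<forall>k\<in>K. cl k \<subseteq> A \<union> A' \<and> pairwise_orth d (cl k) \<and> 0 \<le> wt k"
    unfolding K_def cl_def wt_def using c1(2) c2(2) by auto
  moreover have "(\<Sum>k\<in>{k\<in>K. x \<in> cl k}. wt k) = 1" if x: "x \<in> A \<union> A'" for x
  proof (cases "x \<in> A")
    case True
    then have "x \<notin> A'" using disj by blast
    then have "{k\<in>K. x \<in> cl k} = (\<lambda>k. 2*k) ` {k\<in>K1. x \<in> cl1 k}"
      unfolding K_def cl_def using c2(2) by auto
    then show ?thesis using s1 c1(3) True by simp
  next
    case False
    then have "{k\<in>K. x \<in> cl k} = (\<lambda>k. 2*k+1) ` {k\<in>K2. x \<in> cl2 k}"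
      unfolding K_def cl_def using c1(2) by auto
    then show ?thesis using s2 c2(3) x False by simp
  qed
  moreover have "(\<Sum>k\<in>K. wt k) = (\<Sum>k\<in>(\<lambda>k. 2*k) ` K1. wt k) + (\<Sum>k\<in>(\<lambda>k. 2*k+1) ` K2. wt k)"
    unfolding K_def by (rule sum.union_disjoint[OF _ _ dj]) (simp_all add: c1(1) c2(1))
  then have "(\<Sum>k\<in>K. wt k) = w + w'" using s1 s2 c1(4) c2(4) by simp
  ultimately show ?thesis unfolding orth_cover_def by blast
qed

section \<open>Kronecker products of configurations\<close>

lemma kron_proportional_eq:
  assumes b: "0 < b" and A: "unit_rays a A" and B: "unit_rays b B"
    and x: "x \<in> A" "x' \<in> A" and y: "y \<in> B" "y' \<in> B"
    and eq: "kron b x y = (\<lambda>i. c * kron b x' y' i)"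
  shows "x = x' \<and> y = y'"
proof
  obtain e where "x = (\<lambda>p. e * x' p)"
    using kron_proportional_left[OF b unit_rays_dot_self[OF B y(1)] eq] by blast
  then show "x = x'" using unit_rays_proportional_eq[OF A x] by blast
  obtain e' where "y = (\<lambda>q. e' * y' q)"
    using kron_proportional_right[OF b unit_rays_supported[OF B y(1)] unit_rays_supported[OF B y(2)]
        unit_rays_dot_self[OF A x(1)] eq] by blast
  then show "y = y'" using unit_rays_proportional_eq[OF B y] by blast
qed

lemma kron_inject:
  assumes "0 < b" "unit_rays a A" "unit_rays b B" "x \<in> A" "x' \<in> A" "y \<in> B" "y' \<in> B"
    and "kron b x y = kron b x' y'"
  shows "x = x' \<and> y = y'"
  using kron_proportional_eq[where c = 1] assms by simp

lemma inj_on_kron: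
  assumes "0 < b" "unit_rays a A" "unit_rays b B"
  shows "inj_on (\<lambda>(x, y). kron b x y) (A \<times> B)"
  using kron_inject[OF assms] unfolding inj_on_def by auto

lemma sum_kron_set:
  assumes "0 < b" "unit_rays a A" "unit_rays b B"
  shows "sum g (kron_set b A B) = (\<Sum>x\<in>A. \<Sum>y\<in>B. g (kron b x y))"
proof -
  have "sum g (kron_set b A B) = (\<Sum>p\<in>A \<times> B. g (case p of (x, y) \<Rightarrow> kron b x y))"
    unfolding kron_set_def by (subst sum.reindex[OF inj_on_kron[OF assms]]) (simp add: comp_def)
  also have "\<dots> = (\<Sum>x\<in>A. \<Sum>y\<in>B. g (kron b x y))"
    by (simp add: sum.cartesian_product prod.case_distrib)
  finally show ?thesis .
qed

lemma card_kron_set: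
  assumes "0 < b" "unit_rays a A" "unit_rays b B"
  shows "card (kron_set b A B) = card A * card B"
  unfolding kron_set_def using card_image[OF inj_on_kron[OF assms]] by (simp add: card_cartesian_product)

lemma kron_set_disjoint:
  assumes "0 < b" "unit_rays a A" "unit_rays b B"
    and "A1 \<subseteq> A" "A2 \<subseteq> A" "B1 \<subseteq> B" "B2 \<subseteq> B" "B1 \<inter> B2 = {}"
  shows "kron_set b A1 B1 \<inter> kron_set b A2 B2 = {}"
proof (rule ccontr)
  assume "\<not> ?thesis"
  then obtain x1 y1 x2 y2 where "x1 \<in> A1" "y1 \<in> B1" "x2 \<in> A2" "y2 \<in> B2"
    and "kron b x1 y1 = kron b x2 y2"
    by (auto elim!: kron_setE)
  then have "y1 = y2" using kron_inject[OF assms(1-3)] assms(4-7) by blast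
  then show False using assms(8) \<open>y1 \<in> B1\<close> \<open>y2 \<in> B2\<close> by blast
qed

lemma unit_rays_kron_set:
  assumes b: "0 < b" and A: "unit_rays a A" and B: "unit_rays b B"
  shows "unit_rays (a*b) (kron_set b A B)"
proof -
  have "finite (kron_set b A B)"
    unfolding kron_set_def using unit_rays_finite[OF A] unit_rays_finite[OF B] by simp
  moreover have "supported (a*b) z \<and> dot (a*b) z z = 1" if "z \<in> kron_set b A B" for z
    using that supported_kron[OF b unit_rays_supported[OF A]] dot_kron[OF b]
      unit_rays_dot_self[OF A] unit_rays_dot_self[OF B]
    by (auto elim!: kron_setE)
  moreover have "z = w"
    if z: "z \<in> kron_set b A B" and w: "w \<in> kron_set b A B" and zw: "z = (\<lambda>i. c * w i)" for z w c
  proof -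
    obtain x y x' y' where "x \<in> A" "y \<in> B" "z = kron b x y" "x' \<in> A" "y' \<in> B" "w = kron b x' y'"
      using z w by (auto elim!: kron_setE)
    then show ?thesis using zw kron_proportional_eq[OF b A B, of x x' y y' c] by simp
  qed
  ultimately show ?thesis unfolding unit_rays_def by blast
qed

lemma tight_frame_kron_set:
  assumes b: "0 < b" and A: "unit_rays a A" and B: "unit_rays b B"
    and fA: "tight_frame a A wa" and fB: "tight_frame b B wb"
  shows "tight_frame (a*b) (kron_set b A B) (wa * wb)"
  unfolding tight_frame_def
proof (intro allI impI)
  fix i j assume "i < a*b" "j < a*b"
  then have ij: "i div b < a" "j div b < a" "i mod b < b" "j mod b < b"
    using b by (auto simp: less_mult_imp_div_less)
  have "(\<Sum>z\<in>kron_set b A B. z i * z j)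
      = (\<Sum>x\<in>A. \<Sum>y\<in>B. (x (i div b) * x (j div b)) * (y (i mod b) * y (j mod b)))"
    by (simp add: sum_kron_set[OF b A B] kron_def algebra_simps)
  also have "\<dots> = (\<Sum>x\<in>A. x (i div b) * x (j div b)) * (\<Sum>y\<in>B. y (i mod b) * y (j mod b))"
    by (simp add: sum_product)
  also have "\<dots> = (if i div b = j div b then wa else 0) * (if i mod b = j mod b then wb else 0)"
    using fA fB ij unfolding tight_frame_def by simp
  also have "\<dots> = (if i = j then wa * wb else 0)"
    by (metis div_mod_decomp mult_zero_left mult_zero_right)
  finally show "(\<Sum>z\<in>kron_set b A B. z i * z j) = (if i = j then wa * wb else 0)" .
qed

lemma pairwise_orth_kron_set:
  assumes b: "0 < b" and "pairwise_orth a C" "pairwise_orth b D"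
  shows "pairwise_orth (a*b) (kron_set b C D)"
  unfolding pairwise_orth_def
proof (intro ballI impI)
  fix z w assume "z \<in> kron_set b C D" "w \<in> kron_set b C D" "z \<noteq> w"
  then obtain x y x' y' where "x \<in> C" "y \<in> D" "x' \<in> C" "y' \<in> D"
    and "z = kron b x y" "w = kron b x' y'" "x \<noteq> x' \<or> y \<noteq> y'"
    by (auto elim!: kron_setE)
  then show "dot (a*b) z w = 0"
    using assms unfolding pairwise_orth_def by (auto simp: dot_kron[OF b])
qed

lemma basis_in_kron_set:
  assumes b: "0 < b" and A: "unit_rays a A" and B: "unit_rays b B"
    and C: "basis_in a A C" and D: "basis_in b B D"
  shows "basis_in (a*b) (kron_set b A B) (kron_set b C D)"
proof -
  have CA: "C \<subseteq> A" and DB: "D \<subseteq> B" using C D unfolding basis_in_def by auto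
  have "card (kron_set b C D) = card C * card D"
    using card_kron_set[OF b unit_rays_subset[OF A CA] unit_rays_subset[OF B DB]] .
  then show ?thesis
    using C D pairwise_orth_kron_set[OF b] kron_set_mono[OF CA DB] unfolding basis_in_def by auto
qed

lemma has_basis_in_kron_set:
  assumes "0 < b" "unit_rays a A" "unit_rays b B" "has_basis_in a A" "has_basis_in b B"
  shows "has_basis_in (a*b) (kron_set b A B)"
  using assms basis_in_kron_set[OF assms(1-3)] unfolding has_basis_in_def by blast

lemma indep_le_kron_set:
  assumes b: "0 < b" and A: "unit_rays a A" and B: "unit_rays b B"
    and iA: "indep_le a A na" and iB: "indep_le b B nb"
  shows "indep_le (a*b) (kron_set b A B) (na * nb)"
  unfolding indep_le_def
proof (intro allI impI)
  fix I assume I: "I \<subseteq> kron_set b A B \<and> pairwise_nonorth (a*b) I"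
  define P where "P = {(x, y) \<in> A \<times> B. kron b x y \<in> I}"
  define U where "U = fst ` P"
  define F where "F x = {y \<in> B. (x, y) \<in> P}" for x
  have finP: "finite P"
    using unit_rays_finite[OF A] unit_rays_finite[OF B] unfolding P_def by (auto intro: finite_subset)
  have finU: "finite U" and finF: "finite (F x)" for x
    unfolding U_def F_def using finP unit_rays_finite[OF B] by auto
  have I_eq: "I = (\<lambda>(x, y). kron b x y) ` P"
    using I unfolding P_def by (auto elim!: kron_setE)
  have nonorth: "dot a x x' \<noteq> 0 \<and> dot b y y' \<noteq> 0" if "(x, y) \<in> P" "(x', y') \<in> P" for x y x' y'
  proof -
    have m: "x \<in> A" "y \<in> B" "kron b x y \<in> I" "kron b x' y' \<in> I" using that unfolding P_def by auto
    have "dot (a*b) (kron b x y) (kron b x' y') \<noteq> 0"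
    proof (cases "kron b x y = kron b x' y'")
      case True
      then show ?thesis
        using dot_kron[OF b, of a x y x y] unit_rays_dot_self[OF A m(1)] unit_rays_dot_self[OF B m(2)]
        by simp
    next
      case False
      then show ?thesis using I m unfolding pairwise_nonorth_def by blast
    qed
    then show ?thesis by (simp add: dot_kron[OF b])
  qed
  have "U \<subseteq> A \<and> pairwise_nonorth a U"
    unfolding U_def pairwise_nonorth_def using nonorth by (force simp: P_def)
  then have cU: "card U \<le> na" using iA unfolding indep_le_def by blast
  have cF: "card (F x) \<le> nb" for x
  proof -
    have "F x \<subseteq> B \<and> pairwise_nonorth b (F x)"
      unfolding F_def pairwise_nonorth_def using nonorth[of x] by auto
    then show ?thesis using iB unfolding indep_le_def by blast
  qed
  have "card I \<le> card P" unfolding I_eq using finP by (rule card_image_le)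
  also have "\<dots> \<le> card (Sigma U F)"
  proof (rule card_mono)
    show "P \<subseteq> Sigma U F" unfolding U_def F_def P_def by force
  qed (use finU finF in auto)
  also have "\<dots> = (\<Sum>x\<in>U. card (F x))" using finU finF by (simp add: card_SigmaI)
  also have "\<dots> \<le> card U * nb" using sum_mono[of U "\<lambda>x. card (F x)" "\<lambda>_. nb"] cF by simp
  also have "\<dots> \<le> na * nb" using cU by simp
  finally show "card I \<le> na * nb" .
qed

lemma basis_in_kron_set_exchange:
  assumes b: "0 < b" and A: "unit_rays a A" and B: "unit_rays b B"
    and C: "basis_in a A C" and C0: "basis_in a A C0" and D: "basis_in b B D" and e0: "e0 \<in> D"
  shows "basis_in (a*b) (kron_set b A B) (kron_set b C {e0} \<union> kron_set b C0 (D - {e0}))"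
proof -
  have CA: "C \<subseteq> A" and C0A: "C0 \<subseteq> A" and DB: "D \<subseteq> B"
    using C C0 D unfolding basis_in_def by auto
  have uC: "unit_rays a C" and uC0: "unit_rays a C0" and ue0: "unit_rays b {e0}"
    and uD: "unit_rays b (D - {e0})"
    using unit_rays_subset[OF A CA] unit_rays_subset[OF A C0A] unit_rays_subset[OF B, of "{e0}"]
      unit_rays_subset[OF B, of "D - {e0}"] DB e0 by auto
  have disj: "kron_set b C {e0} \<inter> kron_set b C0 (D - {e0}) = {}"
    using kron_set_disjoint[OF b A B CA C0A, of "{e0}" "D - {e0}"] DB e0 by blast
  have "card (kron_set b C {e0} \<union> kron_set b C0 (D - {e0})) = card C + card C0 * card (D - {e0})"
    using card_Un_disjoint[OF _ _ disj] card_kron_set[OF b uC ue0] card_kron_set[OF b uC0 uD]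
      unit_rays_finite[OF unit_rays_kron_set[OF b uC ue0]]
      unit_rays_finite[OF unit_rays_kron_set[OF b uC0 uD]] by simp
  also have "\<dots> = a + a * (b - 1)"
    using C C0 D e0 unit_rays_finite[OF unit_rays_subset[OF B DB]] unfolding basis_in_def by simp
  also have "\<dots> = a * b" using b by (cases b) auto
  finally have card: "card (kron_set b C {e0} \<union> kron_set b C0 (D - {e0})) = a * b" .
  have "pairwise_orth (a*b) (kron_set b C {e0} \<union> kron_set b C0 (D - {e0}))"
    unfolding pairwise_orth_def
  proof (intro ballI impI)
    fix z w assume z: "z \<in> kron_set b C {e0} \<union> kron_set b C0 (D - {e0})"
      and w: "w \<in> kron_set b C {e0} \<union> kron_set b C0 (D - {e0})" and "z \<noteq> w"
    obtain x y where xy: "z = kron b x y" "y \<in> D" "y = e0 \<and> x \<in> C \<or> y \<noteq> e0 \<and> x \<in> C0"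
      using z e0 by (auto elim!: kron_setE)
    obtain x' y' where xy': "w = kron b x' y'" "y' \<in> D" "y' = e0 \<and> x' \<in> C \<or> y' \<noteq> e0 \<and> x' \<in> C0"
      using w e0 by (auto elim!: kron_setE)
    have "dot a x x' = 0 \<or> dot b y y' = 0"
    proof (cases "y = y'")
      case True
      then have "x \<noteq> x'" "x \<in> C \<and> x' \<in> C \<or> x \<in> C0 \<and> x' \<in> C0"
        using \<open>z \<noteq> w\<close> xy xy' by auto
      then show ?thesis using C C0 unfolding basis_in_def pairwise_orth_def by auto
    next
      case False
      then show ?thesis using D xy xy' unfolding basis_in_def pairwise_orth_def by auto
    qed
    then show "dot (a*b) z w = 0" using xy xy' by (auto simp: dot_kron[OF b])
  qed
  moreover have "kron_set b C {e0} \<union> kron_set b C0 (D - {e0}) \<subseteq> kron_set b A B"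
    using kron_set_mono[OF CA, of "{e0}" B] kron_set_mono[OF C0A, of "D - {e0}" B] e0 DB by auto
  ultimately show ?thesis using card unfolding basis_in_def by simp
qed

text \<open>Given an assignment on \<open>A \<otimes> B\<close>, the sums over the slices \<open>C0 \<otimes> e\<close> (\<open>e \<in> D\<close>) are naturals
  adding up to 1, so exactly one slice \<open>e0\<close> has sum 1; by the exchange lemma, \<open>x \<mapsto> g (x \<otimes> e0)\<close>
  then has sum 1 on every basis of \<open>A\<close>.\<close>

lemma KS_uncolorable_kron_set:
  assumes b: "0 < b" and A: "unit_rays a A" and B: "unit_rays b B" and KA: "KS_uncolorable a A"
    and "has_basis_in a A" "has_basis_in b B"
  shows "KS_uncolorable (a*b) (kron_set b A B)"
  unfolding KS_uncolorable_def
proof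
  assume "\<exists>g :: (nat \<Rightarrow> real) \<Rightarrow> nat. \<forall>C. basis_in (a*b) (kron_set b A B) C \<longrightarrow> sum g C = 1"
  then obtain g :: "(nat \<Rightarrow> real) \<Rightarrow> nat"
    where g: "\<And>C. basis_in (a*b) (kron_set b A B) C \<Longrightarrow> sum g C = 1" by blast
  obtain C0 D where C0: "basis_in a A C0" and D: "basis_in b B D"
    using assms(5,6) unfolding has_basis_in_def by blast
  have uC0: "unit_rays a C0" and uD: "unit_rays b D"
    using C0 D A B unit_rays_subset unfolding basis_in_def by blast+
  define h where "h e = (\<Sum>x\<in>C0. g (kron b x e))" for e
  have "(\<Sum>e\<in>D. h e) = sum g (kron_set b C0 D)"
    unfolding h_def sum_kron_set[OF b uC0 uD] by (rule sum.swap)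
  then have sum_h: "(\<Sum>e\<in>D. h e) = 1" using g[OF basis_in_kron_set[OF b A B C0 D]] by simp
  then obtain e0 where e0: "e0 \<in> D" "h e0 \<noteq> 0" by (metis one_neq_zero sum.neutral)
  then have rest: "(\<Sum>e\<in>D - {e0}. h e) = 0"
    using sum_h sum.remove[OF unit_rays_finite[OF uD] e0(1), of h] by linarith
  have "(\<Sum>x\<in>C. g (kron b x e0)) = 1" if C: "basis_in a A C" for C
  proof -
    have uC: "unit_rays a C" and ue0: "unit_rays b {e0}" and uD': "unit_rays b (D - {e0})"
      using C A uD e0 unit_rays_subset unfolding basis_in_def by blast+
    have "kron_set b C {e0} \<inter> kron_set b C0 (D - {e0}) = {}"
      using kron_set_disjoint[OF b A B, of C C0 "{e0}" "D - {e0}"] C C0 D e0(1)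
      unfolding basis_in_def by blast
    then have "1 = sum g (kron_set b C {e0}) + sum g (kron_set b C0 (D - {e0}))"
      using g[OF basis_in_kron_set_exchange[OF b A B C C0 D e0(1)]]
        unit_rays_finite[OF unit_rays_kron_set[OF b uC ue0]]
        unit_rays_finite[OF unit_rays_kron_set[OF b uC0 uD']]
      by (simp add: sum.union_disjoint)
    also have "sum g (kron_set b C0 (D - {e0})) = (\<Sum>e\<in>D - {e0}. h e)"
      unfolding sum_kron_set[OF b uC0 uD'] h_def by (rule sum.swap)
    also have "sum g (kron_set b C {e0}) = (\<Sum>x\<in>C. g (kron b x e0))"
      by (simp add: sum_kron_set[OF b uC ue0])
    finally show ?thesis using rest by simp
  qed
  then show False using KA unfolding KS_uncolorable_def by blast
qed

lemma kron_mem_kron_set_iff: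
  assumes "0 < b" "unit_rays a A" "unit_rays b B" "x \<in> A" "y \<in> B" "C \<subseteq> A" "D \<subseteq> B"
  shows "kron b x y \<in> kron_set b C D \<longleftrightarrow> x \<in> C \<and> y \<in> D"
proof
  assume "kron b x y \<in> kron_set b C D"
  then obtain x' y' where "x' \<in> C" "y' \<in> D" "kron b x y = kron b x' y'" by (rule kron_setE)
  then show "x \<in> C \<and> y \<in> D" using kron_inject[OF assms(1-3), of x x' y y'] assms(4-7) by auto
qed (auto intro: kron_setI)

lemma orth_cover_kron_set:
  assumes b: "0 < b" and A: "unit_rays a A" and B: "unit_rays b B"
    and cA: "orth_cover a A wa" and cB: "orth_cover b B wb"
  shows "orth_cover (a*b) (kron_set b A B) (wa * wb)"
proof -
  obtain K1 :: "nat set" and cl1 and wt1 :: "nat \<Rightarrow> real"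
    where c1: "finite K1" "\<forall>k\<in>K1. cl1 k \<subseteq> A \<and> pairwise_orth a (cl1 k) \<and> 0 \<le> wt1 k"
      "\<forall>x\<in>A. (\<Sum>k\<in>{k\<in>K1. x \<in> cl1 k}. wt1 k) = 1" "(\<Sum>k\<in>K1. wt1 k) = wa"
    using cA unfolding orth_cover_def by blast
  obtain K2 :: "nat set" and cl2 and wt2 :: "nat \<Rightarrow> real"
    where c2: "finite K2" "\<forall>k\<in>K2. cl2 k \<subseteq> B \<and> pairwise_orth b (cl2 k) \<and> 0 \<le> wt2 k"
      "\<forall>x\<in>B. (\<Sum>k\<in>{k\<in>K2. x \<in> cl2 k}. wt2 k) = 1" "(\<Sum>k\<in>K2. wt2 k) = wb"
    using cB unfolding orth_cover_def by blast
  define K where "K = prod_encode ` (K1 \<times> K2)"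
  define cl where "cl k = (case prod_decode k of (k1, k2) \<Rightarrow> kron_set b (cl1 k1) (cl2 k2))" for k
  define wt where "wt k = (case prod_decode k of (k1, k2) \<Rightarrow> wt1 k1 * wt2 k2)" for k
  have sum_K: "(\<Sum>k\<in>prod_encode ` X. f k) = (\<Sum>(k1, k2)\<in>X. f (prod_encode (k1, k2)))"
    for X and f :: "nat \<Rightarrow> real"
    by (subst sum.reindex[OF inj_on_subset[OF inj_prod_encode subset_UNIV]]) (simp add: split_beta)
  have "finite K" unfolding K_def using c1(1) c2(1) by simp
  moreover have "\<forall>k\<in>K. cl k \<subseteq> kron_set b A B \<and> pairwise_orth (a*b) (cl k) \<and> 0 \<le> wt k"
  proof
    fix k assume "k \<in> K"
    then obtain k1 k2 where k: "k = prod_encode (k1, k2)" "k1 \<in> K1" "k2 \<in> K2" unfolding K_def by auto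
    show "cl k \<subseteq> kron_set b A B \<and> pairwise_orth (a*b) (cl k) \<and> 0 \<le> wt k"
      unfolding cl_def wt_def using k c1(2) c2(2) kron_set_mono pairwise_orth_kron_set[OF b] by simp
  qed
  moreover have "(\<Sum>k\<in>{k\<in>K. z \<in> cl k}. wt k) = 1" if "z \<in> kron_set b A B" for z
  proof -
    obtain x y where xy: "x \<in> A" "y \<in> B" "z = kron b x y" using \<open>z \<in> kron_set b A B\<close> by (rule kron_setE)
    have "{k\<in>K. z \<in> cl k} = prod_encode ` ({k1\<in>K1. x \<in> cl1 k1} \<times> {k2\<in>K2. y \<in> cl2 k2})"
      unfolding K_def cl_def using kron_mem_kron_set_iff[OF b A B xy(1,2)] xy(3) c1(2) c2(2) by auto
    then have "(\<Sum>k\<in>{k\<in>K. z \<in> cl k}. wt k)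
        = (\<Sum>(k1, k2)\<in>{k1\<in>K1. x \<in> cl1 k1} \<times> {k2\<in>K2. y \<in> cl2 k2}. wt1 k1 * wt2 k2)"
      using sum_K unfolding wt_def by simp
    also have "\<dots> = (\<Sum>k1\<in>{k1\<in>K1. x \<in> cl1 k1}. wt1 k1) * (\<Sum>k2\<in>{k2\<in>K2. y \<in> cl2 k2}. wt2 k2)"
      by (simp add: sum.cartesian_product[symmetric] sum_product)
    finally show ?thesis using c1(3) c2(3) xy by simp
  qed
  moreover have "(\<Sum>k\<in>K. wt k) = (\<Sum>(k1, k2)\<in>K1 \<times> K2. wt1 k1 * wt2 k2)"
    unfolding K_def using sum_K unfolding wt_def by simp
  then have "(\<Sum>k\<in>K. wt k) = wa * wb"
    using c1(4) c2(4) sum_product[of wt1 K1 wt2 K2] by (simp add: sum.cartesian_product[symmetric])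
  ultimately show ?thesis unfolding orth_cover_def by blast
qed

section \<open>Two elementary configurations\<close>

definition std_vec :: "nat \<Rightarrow> nat \<Rightarrow> real" where
  "std_vec k = (\<lambda>i. if i = k then 1 else 0)"

definition std_basis :: "nat \<Rightarrow> (nat \<Rightarrow> real) set" where
  "std_basis d = std_vec ` {..<d}"

lemma dot_std_vec: "k < d \<Longrightarrow> l < d \<Longrightarrow> dot d (std_vec k) (std_vec l) = (if k = l then 1 else 0)"
  unfolding dot_def std_vec_def by (simp add: if_distrib[of "\<lambda>u. u * _"] cong: if_cong)

lemma std_vec_proportional: "std_vec k = (\<lambda>i. c * std_vec l i) \<Longrightarrow> k = l"
  using fun_cong[of "std_vec k" _ k] unfolding std_vec_def by (cases "k = l") auto

lemma inj_std_vec: "inj std_vec"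
  unfolding inj_def using std_vec_proportional[of _ 1] by simp

lemma unit_rays_std_basis: "unit_rays d (std_basis d)"
proof -
  have "supported d x \<and> dot d x x = 1" if "x \<in> std_basis d" for x
    using that dot_std_vec unfolding std_basis_def by (auto simp: supported_def std_vec_def)
  moreover have "x = y" if "x \<in> std_basis d" "y \<in> std_basis d" "x = (\<lambda>i. c * y i)" for x y c
    using that std_vec_proportional unfolding std_basis_def by blast
  moreover have "finite (std_basis d)" unfolding std_basis_def by simp
  ultimately show ?thesis unfolding unit_rays_def by blast
qed

lemma card_std_basis: "card (std_basis d) = d"
  unfolding std_basis_def using card_image[OF inj_on_subset[OF inj_std_vec]] by simp

lemma pairwise_orth_std_basis: "pairwise_orth d (std_basis d)"
  unfolding pairwise_orth_def std_basis_def using dot_std_vec by auto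

lemma has_basis_in_std_basis: "has_basis_in d (std_basis d)"
  unfolding has_basis_in_def basis_in_def using pairwise_orth_std_basis card_std_basis by blast

lemma tight_frame_std_basis: "tight_frame d (std_basis d) 1"
  unfolding tight_frame_def
proof (intro allI impI)
  fix i j assume "i < d" "j < d"
  have "(\<Sum>x\<in>std_basis d. x i * x j) = (\<Sum>k<d. std_vec k i * std_vec k j)"
    unfolding std_basis_def by (subst sum.reindex[OF inj_on_subset[OF inj_std_vec]]) auto
  also have "\<dots> = (\<Sum>k<d. if k = i then (if i = j then 1 else 0) else 0)"
    unfolding std_vec_def by (intro sum.cong) auto
  also have "\<dots> = (if i = j then 1 else 0)" using \<open>i < d\<close> by (simp add: sum.delta)
  finally show "(\<Sum>x\<in>std_basis d. x i * x j) = (if i = j then 1 else 0)" .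
qed

lemma indep_le_std_basis: "indep_le d (std_basis d) 1"
  using indep_le_card_cover[of "{0::nat}" "std_basis d" "\<lambda>_. std_basis d" d] pairwise_orth_std_basis
  by simp

lemma orth_cover_std_basis: "orth_cover d (std_basis d) 1"
  unfolding orth_cover_def
  by (rule exI[of _ "{0}"], rule exI[of _ "\<lambda>_. std_basis d"], rule exI[of _ "\<lambda>_. 1"])
    (simp add: pairwise_orth_std_basis)

text \<open>\<open>rot_vec t False\<close> and \<open>rot_vec t True\<close> are \<open>(1, t)\<close> and \<open>(-t, 1)\<close>, normalised; as \<open>t \<ge> 0\<close>,
  distinct \<open>t\<close> give distinct lines.\<close>

definition rot_norm :: "nat \<Rightarrow> real" where
  "rot_norm t = sqrt (1 + (real t)\<^sup>2)"

definition rot_vec :: "nat \<Rightarrow> bool \<Rightarrow> nat \<Rightarrow> real" where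
  "rot_vec t s = (\<lambda>i. (if i = 0 then (if s then - real t else 1)
                       else if i = 1 then (if s then 1 else real t) else 0) / rot_norm t)"

definition rot_bases :: "nat set \<Rightarrow> (nat \<Rightarrow> real) set" where
  "rot_bases T = (\<lambda>(t, s). rot_vec t s) ` (T \<times> UNIV)"

lemma rot_norm_pos: "0 < rot_norm t"
  unfolding rot_norm_def by (simp add: add_pos_nonneg)

lemma rot_norm_sq: "rot_norm t * rot_norm t = 1 + real t * real t"
  unfolding rot_norm_def by (simp add: power2_eq_square add_nonneg_nonneg)

lemma dot_rot_vec: "dot 2 (rot_vec t s) (rot_vec t s') = (if s = s' then 1 else 0)"
proof -
  have "dot 2 (rot_vec t s) (rot_vec t s')
      = ((if s then - real t else 1) * (if s' then - real t else 1)
         + (if s then 1 else real t) * (if s' then 1 else real t)) / (rot_norm t * rot_norm t)"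
    unfolding dot_def rot_vec_def by (simp add: numeral_2_eq_2 add_divide_distrib)
  also have "\<dots> = (if s = s' then 1 else 0)"
    using rot_norm_sq[of t] add_pos_nonneg[of 1 "real t * real t"] by (cases s; cases s') simp_all
  finally show ?thesis .
qed

lemma rot_vec_proportional:
  assumes eq: "rot_vec t s = (\<lambda>i. c * rot_vec t' s' i)"
  shows "t = t' \<and> s = s'"
proof -
  have "rot_vec t s 0 * rot_vec t' s' 1 = rot_vec t s 1 * rot_vec t' s' 0"
    using fun_cong[OF eq, of 0] fun_cong[OF eq, of 1] by simp
  then have "(if s then - real t else 1) * (if s' then 1 else real t')
      = (if s then 1 else real t) * (if s' then - real t' else 1)"
    using rot_norm_pos[of t] rot_norm_pos[of t'] by (simp add: rot_vec_def field_simps)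
  moreover have "0 \<le> real t * real t'" by simp
  ultimately show ?thesis by (cases s; cases s') auto
qed

lemma inj_on_rot_vec: "inj_on (\<lambda>(t, s). rot_vec t s) X"
  unfolding inj_on_def using rot_vec_proportional[of _ _ 1] by auto

lemma rot_basis_subset: "t \<in> T \<Longrightarrow> {rot_vec t False, rot_vec t True} \<subseteq> rot_bases T"
  unfolding rot_bases_def by auto

lemma rot_bases_eq: "rot_bases T = (\<Union>t\<in>T. {rot_vec t False, rot_vec t True})"
  unfolding rot_bases_def
proof (intro equalityI subsetI)
  fix x assume "x \<in> (\<lambda>(t, s). rot_vec t s) ` (T \<times> UNIV)"
  then obtain t s where "t \<in> T" "x = rot_vec t s" by auto
  then show "x \<in> (\<Union>t\<in>T. {rot_vec t False, rot_vec t True})" by (cases s) auto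
qed auto

lemma pairwise_orth_rot_basis: "pairwise_orth 2 {rot_vec t False, rot_vec t True}"
  unfolding pairwise_orth_def by (auto simp: dot_rot_vec)

lemma unit_rays_rot_bases:
  assumes "finite T"
  shows "unit_rays 2 (rot_bases T)"
proof -
  have "supported 2 x \<and> dot 2 x x = 1" if x: "x \<in> rot_bases T" for x
  proof -
    obtain t s where "x = rot_vec t s" using x unfolding rot_bases_def by auto
    then show ?thesis using dot_rot_vec[of t s s] by (simp add: supported_def rot_vec_def)
  qed
  moreover have "x = y" if x: "x \<in> rot_bases T" and y: "y \<in> rot_bases T" and "x = (\<lambda>i. c * y i)"
    for x y c
  proof -
    obtain t s t' s' where "x = rot_vec t s" "y = rot_vec t' s'"
      using x y unfolding rot_bases_def by auto
    then show ?thesis using rot_vec_proportional[of t s c t' s'] \<open>x = (\<lambda>i. c * y i)\<close> by simp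
  qed
  moreover have "finite (rot_bases T)" unfolding rot_bases_def using assms by simp
  ultimately show ?thesis unfolding unit_rays_def by blast
qed

lemma has_basis_in_rot_bases: "t \<in> T \<Longrightarrow> has_basis_in 2 (rot_bases T)"
proof -
  assume "t \<in> T"
  have "rot_vec t False \<noteq> rot_vec t True" using rot_vec_proportional[of t False 1 t True] by auto
  then show ?thesis
    unfolding has_basis_in_def basis_in_def
    using rot_basis_subset[OF \<open>t \<in> T\<close>] pairwise_orth_rot_basis[of t]
    by (intro exI[of _ "{rot_vec t False, rot_vec t True}"]) simp
qed

lemma tight_frame_rot_bases:
  assumes "finite T"
  shows "tight_frame 2 (rot_bases T) (card T)"
  unfolding tight_frame_def
proof (intro allI impI)
  fix i j :: nat assume "i < 2" "j < 2"
  have "(\<Sum>x\<in>rot_bases T. x i * x j) = (\<Sum>(t, s)\<in>T \<times> UNIV. rot_vec t s i * rot_vec t s j)"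
    unfolding rot_bases_def by (subst sum.reindex[OF inj_on_rot_vec]) (simp add: split_beta)
  also have "\<dots> = (\<Sum>t\<in>T. rot_vec t False i * rot_vec t False j + rot_vec t True i * rot_vec t True j)"
    by (simp add: sum.cartesian_product[symmetric] UNIV_bool add.commute)
  also have "\<dots> = (\<Sum>t\<in>T. if i = j then 1 else 0)"
  proof (intro sum.cong refl)
    fix t
    have "1 + real t * real t \<noteq> 0" using add_pos_nonneg[of 1 "real t * real t"] by simp
    then show "rot_vec t False i * rot_vec t False j + rot_vec t True i * rot_vec t True j
        = (if i = j then 1 else 0)"
      using \<open>i < 2\<close> \<open>j < 2\<close> rot_norm_sq[of t]
      by (auto simp: rot_vec_def less_2_cases_iff add_divide_distrib[symmetric])
  qed
  finally show "(\<Sum>x\<in>rot_bases T. x i * x j) = (if i = j then real (card T) else 0)" by simp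
qed

lemma orth_cover_rot_bases:
  assumes "finite T"
  shows "orth_cover 2 (rot_bases T) (card T)"
  unfolding orth_cover_def
proof (intro exI[of _ T] exI[of _ "\<lambda>t. {rot_vec t False, rot_vec t True}"] exI[of _ "\<lambda>_. 1"] conjI)
  show "\<forall>x\<in>rot_bases T. (\<Sum>t\<in>{t \<in> T. x \<in> {rot_vec t False, rot_vec t True}}. 1::real) = 1"
  proof
    fix x assume "x \<in> rot_bases T"
    then obtain t s where "t \<in> T" "x = rot_vec t s" unfolding rot_bases_def by auto
    then have "{t' \<in> T. x \<in> {rot_vec t' False, rot_vec t' True}} = {t}"
      using rot_vec_proportional[of t s 1] by (cases s) auto
    then show "(\<Sum>t\<in>{t \<in> T. x \<in> {rot_vec t False, rot_vec t True}}. 1::real) = 1" by simp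
  qed
qed (use assms rot_basis_subset pairwise_orth_rot_basis in auto)

lemma indep_le_rot_bases: "finite T \<Longrightarrow> indep_le 2 (rot_bases T) (card T)"
  by (rule indep_le_card_cover[where cl = "\<lambda>t. {rot_vec t False, rot_vec t True}"])
    (auto simp: rot_bases_eq pairwise_orth_rot_basis)

section \<open>Cabello's 18 vectors in dimension 4\<close>

text \<open>The 18 vectors of Cabello, Estebaranz and Garcia-Alcaine (1996), given by integer
  coordinates, and their 9 orthogonal bases, given by indices. Every vector lies in exactly two
  of the bases, which drives the parity argument for uncolorability, the bound on non-orthogonal
  subsets and the cover of weight 9/2.\<close>

definition cabello_coords :: "int list list" where
  "cabello_coords =
     [[0,0,0,1], [0,0,1,0], [1,1,0,0], [1,-1,0,0], [0,1,0,0], [1,0,1,0],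
      [1,0,-1,0], [1,-1,1,-1], [1,-1,-1,1], [0,0,1,1], [1,1,1,1], [0,1,0,-1],
      [1,0,0,1], [1,0,0,-1], [0,1,-1,0], [1,1,-1,1], [1,1,1,-1], [-1,1,1,1]]"

definition cabello_index_lists :: "nat list list" where
  "cabello_index_lists =
     [[0, 1, 2, 3], [0, 4, 5, 6], [7, 8, 2, 9], [7, 10, 6, 11], [1, 4, 12, 13],
      [8, 10, 13, 14], [15, 16, 3, 9], [15, 17, 5, 11], [16, 17, 12, 14]]"

definition cabello_raw :: "nat \<Rightarrow> nat \<Rightarrow> real" where
  "cabello_raw k i = (if i < 4 then of_int (cabello_coords ! k ! i) else 0)"

definition cabello_sqnorm :: "nat \<Rightarrow> real" where
  "cabello_sqnorm k = (\<Sum>i<4. (cabello_raw k i)^2)"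

definition cabello_vec :: "nat \<Rightarrow> nat \<Rightarrow> real" where
  "cabello_vec k = (\<lambda>i. cabello_raw k i / sqrt (cabello_sqnorm k))"

definition cabello_basis_idx :: "nat \<Rightarrow> nat set" where
  "cabello_basis_idx b = set (cabello_index_lists ! b)"

definition cabello_basis :: "nat \<Rightarrow> (nat \<Rightarrow> real) set" where
  "cabello_basis b = cabello_vec ` cabello_basis_idx b"

definition cabello :: "(nat \<Rightarrow> real) set" where
  "cabello = cabello_vec ` {..<18}"

lemma nat_less_18_iff: "(k::nat) < 18 \<longleftrightarrow> k = 0 \<or> k = 1 \<or> k = 2 \<or> k = 3 \<or> k = 4 \<or> k = 5 \<or> k = 6 \<or> k = 7 \<or> k = 8
   \<or> k = 9 \<or> k = 10 \<or> k = 11 \<or> k = 12 \<or> k = 13 \<or> k = 14 \<or> k = 15 \<or> k = 16 \<or> k = 17"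
  by presburger

lemma nat_less_9_iff: "(k::nat) < 9 \<longleftrightarrow> k = 0 \<or> k = 1 \<or> k = 2 \<or> k = 3 \<or> k = 4 \<or> k = 5 \<or> k = 6 \<or> k = 7 \<or> k = 8"
  by presburger

lemma nat_less_4_iff: "(k::nat) < 4 \<longleftrightarrow> k = 0 \<or> k = 1 \<or> k = 2 \<or> k = 3"
  by auto

lemma sum_lessThan_4: "(\<Sum>i<(4::nat). f i) = f 0 + f 1 + f 2 + (f 3 :: real)"
  by (simp add: eval_nat_numeral)

lemma sum_lessThan_9: "(\<Sum>i<(9::nat). f i) = f 0 + f 1 + f 2 + f 3 + f 4 + f 5 + f 6 + f 7 + (f 8 :: 'a::comm_monoid_add)"
  by (simp add: eval_nat_numeral)

lemma sum_lessThan_18: "(\<Sum>i<(18::nat). f i) = f 0 + f 1 + f 2 + f 3 + f 4 + f 5 + f 6 + f 7 + f 8 + f 9 + f 10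
   + f 11 + f 12 + f 13 + f 14 + f 15 + f 16 + (f 17 :: 'a::comm_monoid_add)"
  by (simp add: eval_nat_numeral)

lemma cabello_sqnorm_values:
  "k < 18 \<Longrightarrow> cabello_sqnorm k = (if k = 0 \<or> k = 1 \<or> k = 4 then 1
     else if k = 7 \<or> k = 8 \<or> k = 10 \<or> k = 15 \<or> k = 16 \<or> k = 17 then 4 else 2)"
  unfolding nat_less_18_iff cabello_sqnorm_def sum_lessThan_4
  by (elim disjE) (simp_all add: cabello_raw_def cabello_coords_def)

lemma cabello_sqnorm_pos: "k < 18 \<Longrightarrow> 0 < cabello_sqnorm k"
  using cabello_sqnorm_values by simp

lemma supported_cabello_vec: "supported 4 (cabello_vec k)"
  unfolding supported_def cabello_vec_def cabello_raw_def by simp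

lemma dot_cabello_vec:
  "dot 4 (cabello_vec k) (cabello_vec k')
     = (\<Sum>i<4. cabello_raw k i * cabello_raw k' i) / (sqrt (cabello_sqnorm k) * sqrt (cabello_sqnorm k'))"
  unfolding dot_def cabello_vec_def by (simp add: sum_divide_distrib)

lemma dot_self_cabello_vec: "k < 18 \<Longrightarrow> dot 4 (cabello_vec k) (cabello_vec k) = 1"
proof -
  assume k: "k < 18"
  have "(\<Sum>i<4. cabello_raw k i * cabello_raw k i) = cabello_sqnorm k"
    unfolding cabello_sqnorm_def by (simp add: power2_eq_square)
  moreover have "sqrt (cabello_sqnorm k) * sqrt (cabello_sqnorm k) = cabello_sqnorm k"
    using cabello_sqnorm_pos[OF k] by simp
  ultimately show ?thesis using cabello_sqnorm_pos[OF k] by (simp add: dot_cabello_vec)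
qed

lemma cabello_raw_proportional:
  "k < 18 \<Longrightarrow> k' < 18 \<Longrightarrow> cabello_raw k 0 = c * cabello_raw k' 0 \<Longrightarrow> cabello_raw k 1 = c * cabello_raw k' 1
    \<Longrightarrow> cabello_raw k 2 = c * cabello_raw k' 2 \<Longrightarrow> cabello_raw k 3 = c * cabello_raw k' 3 \<Longrightarrow> k = k'"
  unfolding nat_less_18_iff by (elim disjE; simp add: cabello_raw_def cabello_coords_def; linarith?)

lemma cabello_vec_proportional:
  assumes k: "k < 18" "k' < 18" and eq: "cabello_vec k = (\<lambda>i. c * cabello_vec k' i)"
  shows "k = k'"
proof -
  define s where "s = sqrt (cabello_sqnorm k)"
  define s' where "s' = sqrt (cabello_sqnorm k')"
  have sp: "s \<noteq> 0" "s' \<noteq> 0" using cabello_sqnorm_pos[OF k(1)] cabello_sqnorm_pos[OF k(2)] unfolding s_def s'_def by auto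
  have "cabello_raw k i = (c * s / s') * cabello_raw k' i" for i
  proof -
    have "cabello_vec k i = c * cabello_vec k' i" using eq by metis
    then have "cabello_raw k i / s = c * (cabello_raw k' i / s')" unfolding cabello_vec_def s_def s'_def by simp
    then show ?thesis using sp by (simp add: field_simps)
  qed
  then show ?thesis using cabello_raw_proportional[OF k] by blast
qed

lemma inj_on_cabello_vec: "inj_on cabello_vec {..<18}"
  unfolding inj_on_def using cabello_vec_proportional[of _ _ 1] by simp

lemma cabello_basis_idx_subset: "b < 9 \<Longrightarrow> cabello_basis_idx b \<subseteq> {..<18}"
  unfolding nat_less_9_iff cabello_basis_idx_def cabello_index_lists_def by (elim disjE) auto

lemma card_cabello_basis_idx: "b < 9 \<Longrightarrow> card (cabello_basis_idx b) = 4"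
  unfolding nat_less_9_iff cabello_basis_idx_def cabello_index_lists_def by (elim disjE) auto

lemma cabello_basis_idx_orth:
  "b < 9 \<Longrightarrow> k \<in> cabello_basis_idx b \<Longrightarrow> k' \<in> cabello_basis_idx b \<Longrightarrow> k \<noteq> k'
    \<Longrightarrow> (\<Sum>i<4. cabello_raw k i * cabello_raw k' i) = 0"
  unfolding nat_less_9_iff cabello_basis_idx_def cabello_index_lists_def sum_lessThan_4 by (elim disjE) (auto simp: cabello_raw_def cabello_coords_def)

lemma unit_rays_cabello: "unit_rays 4 cabello"
proof -
  have "finite cabello" unfolding cabello_def by simp
  moreover have "\<forall>x\<in>cabello. supported 4 x \<and> dot 4 x x = 1"
    unfolding cabello_def using supported_cabello_vec dot_self_cabello_vec by auto
  moreover have "\<forall>x\<in>cabello. \<forall>y\<in>cabello. \<forall>c. x = (\<lambda>i. c * y i) \<longrightarrow> x = y"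
  proof (intro ballI allI impI)
    fix x y c assume x: "x \<in> cabello" and y: "y \<in> cabello" and eq: "x = (\<lambda>i. c * y i)"
    obtain k where k: "k < 18" "x = cabello_vec k" using x unfolding cabello_def by auto
    obtain k' where k': "k' < 18" "y = cabello_vec k'" using y unfolding cabello_def by auto
    have "k = k'" using cabello_vec_proportional[OF k(1) k'(1), of c] eq k k' by simp
    then show "x = y" using k k' by simp
  qed
  ultimately show ?thesis unfolding unit_rays_def by blast
qed

lemma basis_in_cabello: "b < 9 \<Longrightarrow> basis_in 4 cabello (cabello_basis b)"
proof -
  assume b: "b < 9"
  have sub: "cabello_basis b \<subseteq> cabello" unfolding cabello_basis_def cabello_def using cabello_basis_idx_subset[OF b] by auto
  have "card (cabello_basis b) = 4" unfolding cabello_basis_def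
    using card_image[OF inj_on_subset[OF inj_on_cabello_vec cabello_basis_idx_subset[OF b]]] card_cabello_basis_idx[OF b] by simp
  moreover have "pairwise_orth 4 (cabello_basis b)"
    unfolding pairwise_orth_def cabello_basis_def
  proof (intro ballI impI)
    fix x y assume "x \<in> cabello_vec ` cabello_basis_idx b" "y \<in> cabello_vec ` cabello_basis_idx b" "x \<noteq> y"
    then obtain k k' where "k \<in> cabello_basis_idx b" "k' \<in> cabello_basis_idx b" "x = cabello_vec k" "y = cabello_vec k'" "k \<noteq> k'" by auto
    then show "dot 4 x y = 0" using cabello_basis_idx_orth[OF b] dot_cabello_vec by simp
  qed
  ultimately show ?thesis unfolding basis_in_def using sub by simp
qed

lemma has_basis_in_cabello: "has_basis_in 4 cabello"
  unfolding has_basis_in_def using basis_in_cabello[of 0] by auto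

lemma sum_cabello_bases:
  "(\<Sum>b<9. \<Sum>k\<in>cabello_basis_idx b. h k) = (\<Sum>k<18. h k) + (\<Sum>k<18. (h k :: 'a :: comm_monoid_add))"
  unfolding sum_lessThan_9 sum_lessThan_18 cabello_basis_idx_def cabello_index_lists_def by (simp add: add_ac)

lemma sum_cabello_basis:
  "b < 9 \<Longrightarrow> sum g (cabello_basis b) = (\<Sum>k\<in>cabello_basis_idx b. g (cabello_vec k))"
  unfolding cabello_basis_def
  by (rule sum.reindex_cong[OF inj_on_subset[OF inj_on_cabello_vec cabello_basis_idx_subset]]) auto

lemma KS_uncolorable_cabello: "KS_uncolorable 4 cabello"
  unfolding KS_uncolorable_def
proof
  assume "\<exists>g :: (nat \<Rightarrow> real) \<Rightarrow> nat. \<forall>C. basis_in 4 cabello C \<longrightarrow> sum g C = 1"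
  then obtain g :: "(nat \<Rightarrow> real) \<Rightarrow> nat"
    where g: "\<And>C. basis_in 4 cabello C \<Longrightarrow> sum g C = 1" by blast
  have "\<And>b. b < 9 \<Longrightarrow> (\<Sum>k\<in>cabello_basis_idx b. g (cabello_vec k)) = 1"
    using g basis_in_cabello sum_cabello_basis by metis
  then have "(\<Sum>b<9. \<Sum>k\<in>cabello_basis_idx b. g (cabello_vec k)) = 9" by simp
  then have "(\<Sum>k<18. g (cabello_vec k)) + (\<Sum>k<18. g (cabello_vec k)) = 9"
    using sum_cabello_bases[of "\<lambda>k. g (cabello_vec k)"] by simp
  then show False by presburger
qed

lemma card_filter_eq_sum: "finite A \<Longrightarrow> card {k\<in>A. P k} = (\<Sum>k\<in>A. if P k then 1 else (0::nat))"
  by (simp add: sum.If_cases Int_def)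

lemma indep_le_cabello: "indep_le 4 cabello 4"
  unfolding indep_le_def
proof (intro allI impI)
  fix I assume I: "I \<subseteq> cabello \<and> pairwise_nonorth 4 I"
  define J where "J = {k \<in> {..<18}. cabello_vec k \<in> I}"
  have IJ: "I = cabello_vec ` J" using I unfolding J_def cabello_def by auto
  have cI: "card I = card J" unfolding IJ
    by (rule card_image[OF inj_on_subset[OF inj_on_cabello_vec]]) (auto simp: J_def)
  have cJ: "card J = (\<Sum>k<18. if k \<in> J then 1 else 0)"
    using card_filter_eq_sum[of "{..<18}" "\<lambda>k. k \<in> J"] unfolding J_def by simp
  have le1: "(\<Sum>k\<in>cabello_basis_idx b. if k \<in> J then 1 else (0::nat)) \<le> 1" if b: "b < 9" for b
  proof -
    have fin: "finite (cabello_basis_idx b)" unfolding cabello_basis_idx_def by simp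
    have eq: "(\<Sum>k\<in>cabello_basis_idx b. if k \<in> J then 1 else (0::nat))
        = card {k \<in> cabello_basis_idx b. k \<in> J}"
      using card_filter_eq_sum[OF fin, of "\<lambda>k. k \<in> J"] by simp
    have "k = k'" if "k \<in> cabello_basis_idx b" "k \<in> J" "k' \<in> cabello_basis_idx b" "k' \<in> J" for k k'
    proof (rule ccontr)
      assume ne: "k \<noteq> k'"
      have kk: "k < 18" "k' < 18" "cabello_vec k \<in> I" "cabello_vec k' \<in> I"
        using that unfolding J_def by auto
      have "cabello_vec k \<noteq> cabello_vec k'" using inj_on_cabello_vec kk ne unfolding inj_on_def by auto
      then have "dot 4 (cabello_vec k) (cabello_vec k') \<noteq> 0"
        using I kk unfolding pairwise_nonorth_def by auto
      moreover have "dot 4 (cabello_vec k) (cabello_vec k') = 0"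
        using cabello_basis_idx_orth[OF b, of k k'] that ne dot_cabello_vec by simp
      ultimately show False by simp
    qed
    then have "card {k \<in> cabello_basis_idx b. k \<in> J} \<le> 1"
      using card_le_Suc0_iff_eq[of "{k \<in> cabello_basis_idx b. k \<in> J}"] fin by auto
    then show ?thesis using eq by simp
  qed
  have "(\<Sum>b<9. \<Sum>k\<in>cabello_basis_idx b. if k \<in> J then 1 else (0::nat)) \<le> (\<Sum>b<(9::nat). (1::nat))"
    by (rule sum_mono) (use le1 in simp)
  then have "card J + card J \<le> 9"
    using sum_cabello_bases[of "\<lambda>k. if k \<in> J then 1 else (0::nat)"] cJ by simp
  then show "card I \<le> 4" using cI by simp
qed

lemma cabello_basis_count:
  "k < 18 \<Longrightarrow> (\<Sum>b<9. if k \<in> cabello_basis_idx b then 1/2 else (0::real)) = 1"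
  unfolding nat_less_18_iff sum_lessThan_9 cabello_basis_idx_def cabello_index_lists_def
  by (elim disjE) simp_all

lemma orth_cover_cabello: "orth_cover 4 cabello (9/2)"
  unfolding orth_cover_def
proof (rule exI[of _ "{..<9}"], rule exI[of _ cabello_basis], rule exI[of _ "\<lambda>_. 1/2"], intro conjI)
  show "\<forall>k\<in>{..<9}. cabello_basis k \<subseteq> cabello \<and> pairwise_orth 4 (cabello_basis k) \<and> 0 \<le> (1/2::real)"
    using basis_in_cabello unfolding basis_in_def by auto
  show "\<forall>x\<in>cabello. (\<Sum>k\<in>{k \<in> {..<9}. x \<in> cabello_basis k}. 1/2) = (1::real)"
  proof
    fix x assume "x \<in> cabello"
    then obtain k where k: "k < 18" "x = cabello_vec k" unfolding cabello_def by auto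
    have mem: "cabello_vec k \<in> cabello_basis b \<longleftrightarrow> k \<in> cabello_basis_idx b" if "b < 9" for b
    proof
      assume "cabello_vec k \<in> cabello_basis b"
      then obtain k' where "k' \<in> cabello_basis_idx b" "cabello_vec k = cabello_vec k'"
        unfolding cabello_basis_def by auto
      moreover then have "k' < 18" using cabello_basis_idx_subset[OF that] by auto
      ultimately show "k \<in> cabello_basis_idx b" using inj_on_cabello_vec k(1) unfolding inj_on_def by auto
    qed (auto simp: cabello_basis_def)
    have seteq: "{b \<in> {..<9}. x \<in> cabello_basis b} = {b \<in> {..<9}. k \<in> cabello_basis_idx b}"
      using mem k by auto
    have "(\<Sum>b\<in>{b \<in> {..<9}. x \<in> cabello_basis b}. 1/2)
        = (\<Sum>b<9. if k \<in> cabello_basis_idx b then 1/2 else (0::real))"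
      unfolding seteq by (rule sum.inter_filter) simp
    then show "(\<Sum>b\<in>{b \<in> {..<9}. x \<in> cabello_basis b}. 1/2) = (1::real)"
      using cabello_basis_count[OF k(1)] by simp
  qed
qed simp_all

lemma tight_frame_cabello: "tight_frame 4 cabello (9/2)"
  unfolding tight_frame_def
proof (intro allI impI)
  fix i j :: nat assume ij: "i < 4" "j < 4"
  have "(\<Sum>x\<in>cabello. x i * x j) = (\<Sum>k<18. cabello_vec k i * cabello_vec k j)"
    unfolding cabello_def by (rule sum.reindex_cong[OF inj_on_cabello_vec]) auto
  also have "\<dots> = (\<Sum>k<18. cabello_raw k i * cabello_raw k j / cabello_sqnorm k)"
  proof (rule sum.cong[OF refl])
    fix k :: nat assume "k \<in> {..<18}"
    then have "0 < cabello_sqnorm k" using cabello_sqnorm_pos by simp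
    then have "sqrt (cabello_sqnorm k) * sqrt (cabello_sqnorm k) = cabello_sqnorm k" by simp
    then show "cabello_vec k i * cabello_vec k j = cabello_raw k i * cabello_raw k j / cabello_sqnorm k"
      unfolding cabello_vec_def by (simp add: field_simps)
  qed
  also have "\<dots> = (if i = j then 9/2 else 0)"
    using ij unfolding nat_less_4_iff sum_lessThan_18
    by (elim disjE) (simp_all add: cabello_raw_def cabello_coords_def cabello_sqnorm_values)
  finally show "(\<Sum>x\<in>cabello. x i * x j) = (if i = j then 9/2 else 0)" .
qed

section \<open>The Lovasz theta number of a configuration\<close>

definition theta_feasible :: "'v set \<Rightarrow> ('v \<Rightarrow> 'v \<Rightarrow> bool) \<Rightarrow> ('v \<Rightarrow> 'v \<Rightarrow> real) \<Rightarrow> bool" where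
  "theta_feasible V E X \<longleftrightarrow> (\<forall>i\<in>V. \<forall>j\<in>V. X i j = X j i)
     \<and> (\<forall>z. (\<Sum>i\<in>V. \<Sum>j\<in>V. z i * X i j * z j) \<ge> 0)
     \<and> (\<Sum>i\<in>V. X i i) = 1
     \<and> (\<forall>i\<in>V. \<forall>j\<in>V. E i j \<longrightarrow> X i j = 0)"

lemma lovasz_theta_eqI:
  assumes "theta_feasible V E X0" "(\<Sum>i\<in>V. \<Sum>j\<in>V. X0 i j) = w"
    and "\<And>X. theta_feasible V E X \<Longrightarrow> (\<Sum>i\<in>V. \<Sum>j\<in>V. X i j) \<le> w"
  shows "lovasz_theta V E = w"
  unfolding lovasz_theta_def using assms unfolding theta_feasible_def
  by (intro cSup_eq_maximum) blast+

lemma sum_cover_quadratic_forms: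
  fixes X :: "'v \<Rightarrow> 'v \<Rightarrow> real" and cl :: "'k \<Rightarrow> 'v set" and wt :: "'k \<Rightarrow> real"
  assumes "finite V" "finite K"
    and clique: "\<And>k u v. k \<in> K \<Longrightarrow> u \<in> cl k \<Longrightarrow> v \<in> cl k \<Longrightarrow> u \<noteq> v \<Longrightarrow> X u v = 0"
    and cover: "\<And>u. u \<in> V \<Longrightarrow> (\<Sum>k\<in>{k\<in>K. u \<in> cl k}. wt k) = 1"
    and wt_sum: "(\<Sum>k\<in>K. wt k) = W"
  shows "(\<Sum>k\<in>K. wt k * (\<Sum>i\<in>V. \<Sum>j\<in>V. (W * of_bool (i \<in> cl k) - 1) * X i j * (W * of_bool (j \<in> cl k) - 1)))
    = W\<^sup>2 * (\<Sum>i\<in>V. X i i) - W * (\<Sum>i\<in>V. \<Sum>j\<in>V. X i j)"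
proof -
  define ind where "ind k i = (of_bool (i \<in> cl k) :: real)" for k i
  have cover': "(\<Sum>k\<in>K. wt k * ind k i) = 1" if "i \<in> V" for i
    using cover[OF that] unfolding ind_def
    by (simp add: sum.inter_filter[OF \<open>finite K\<close>] of_bool_def if_distrib cong: if_cong)
  have clique': "X i j * (\<Sum>k\<in>K. wt k * ind k i * ind k j) = (if i = j then X i i else 0)"
    if "i \<in> V" "j \<in> V" for i j
  proof (cases "i = j")
    case True
    have "(\<Sum>k\<in>K. wt k * ind k i * ind k i) = (\<Sum>k\<in>K. wt k * ind k i)"
      by (intro sum.cong) (auto simp: ind_def)
    then show ?thesis using True cover'[OF that(1)] by simp
  next
    case False
    then have zero: "X i j * (wt k * ind k i * ind k j) = 0" if "k \<in> K" for k
      using clique[OF that, of i j] by (auto simp: ind_def)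
    have "(\<Sum>k\<in>K. X i j * (wt k * ind k i * ind k j)) = 0"
      using zero by (intro sum.neutral) blast
    then show ?thesis using False by (simp add: sum_distrib_left)
  qed
  have entry: "(\<Sum>k\<in>K. wt k * ((W * ind k i - 1) * X i j * (W * ind k j - 1)))
      = (if i = j then W\<^sup>2 * X i i else 0) - W * X i j" if "i \<in> V" "j \<in> V" for i j
  proof -
    have "wt k * ((W * ind k i - 1) * X i j * (W * ind k j - 1))
        = W\<^sup>2 * (X i j * (wt k * ind k i * ind k j)) - W * X i j * (wt k * ind k i)
          - W * X i j * (wt k * ind k j) + X i j * wt k" for k
      by (simp add: algebra_simps power2_eq_square)
    then have "(\<Sum>k\<in>K. wt k * ((W * ind k i - 1) * X i j * (W * ind k j - 1)))
        = W\<^sup>2 * (X i j * (\<Sum>k\<in>K. wt k * ind k i * ind k j)) - W * X i j * (\<Sum>k\<in>K. wt k * ind k i)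
          - W * X i j * (\<Sum>k\<in>K. wt k * ind k j) + X i j * (\<Sum>k\<in>K. wt k)"
      by (simp add: sum.distrib sum_subtractf sum_distrib_left)
    also have "\<dots> = W\<^sup>2 * (if i = j then X i i else 0) - W * X i j * 1 - W * X i j * 1 + X i j * W"
      by (simp only: clique'[OF that] cover'[OF that(1)] cover'[OF that(2)] wt_sum)
    finally show ?thesis by simp
  qed
  have "(\<Sum>k\<in>K. wt k * (\<Sum>i\<in>V. \<Sum>j\<in>V. (W * ind k i - 1) * X i j * (W * ind k j - 1)))
      = (\<Sum>i\<in>V. \<Sum>j\<in>V. \<Sum>k\<in>K. wt k * ((W * ind k i - 1) * X i j * (W * ind k j - 1)))"
    by (simp add: sum_distrib_left sum.swap[of _ K])
  also have "\<dots> = (\<Sum>i\<in>V. \<Sum>j\<in>V. (if i = j then W\<^sup>2 * X i i else 0) - W * X i j)"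
    using entry by simp
  also have "\<dots> = W\<^sup>2 * (\<Sum>i\<in>V. X i i) - W * (\<Sum>i\<in>V. \<Sum>j\<in>V. X i j)"
    using \<open>finite V\<close> by (simp add: sum_subtractf sum_distrib_left sum.delta)
  finally show ?thesis unfolding ind_def .
qed

text \<open>The dual bound: for a positive semidefinite \<open>X\<close> of trace 1 vanishing off the diagonal of every
  clique \<open>cl k\<close>, average the inequalities \<open>(W 1\<^sub>k - 1)\<^sup>T X (W 1\<^sub>k - 1) \<ge> 0\<close> with the cover weights; this
  leaves \<open>W\<^sup>2 - W \<Sum>X \<ge> 0\<close>.\<close>

lemma sum_entries_le_cover_weight:
  fixes X :: "'v \<Rightarrow> 'v \<Rightarrow> real" and cl :: "'k \<Rightarrow> 'v set" and wt :: "'k \<Rightarrow> real"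
  assumes "finite V" "finite K"
    and "\<And>k u v. k \<in> K \<Longrightarrow> u \<in> cl k \<Longrightarrow> v \<in> cl k \<Longrightarrow> u \<noteq> v \<Longrightarrow> X u v = 0"
    and "\<And>u. u \<in> V \<Longrightarrow> (\<Sum>k\<in>{k\<in>K. u \<in> cl k}. wt k) = 1"
    and wt_nonneg: "\<And>k. k \<in> K \<Longrightarrow> 0 \<le> wt k" and "(\<Sum>k\<in>K. wt k) = W" and "0 < W"
    and psd: "\<And>z. 0 \<le> (\<Sum>i\<in>V. \<Sum>j\<in>V. z i * X i j * z j)"
    and trace: "(\<Sum>i\<in>V. X i i) = 1"
  shows "(\<Sum>i\<in>V. \<Sum>j\<in>V. X i j) \<le> W"
proof -
  have "0 \<le> (\<Sum>k\<in>K. wt k * (\<Sum>i\<in>V. \<Sum>j\<in>V.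
      (W * of_bool (i \<in> cl k) - 1) * X i j * (W * of_bool (j \<in> cl k) - 1)))"
    by (rule sum_nonneg, rule mult_nonneg_nonneg) (use wt_nonneg psd in auto)
  also have "\<dots> = W * W - W * (\<Sum>i\<in>V. \<Sum>j\<in>V. X i j)"
    using sum_cover_quadratic_forms[OF assms(1-4,6)] trace by (simp add: power2_eq_square)
  finally show ?thesis using \<open>0 < W\<close> by simp
qed

lemma sum_dot_sq_eq_sum_sq:
  fixes w :: "(nat \<Rightarrow> real) \<Rightarrow> real"
  shows "(\<Sum>x\<in>A. \<Sum>y\<in>A. w x * (dot d x y)\<^sup>2 * w y) = (\<Sum>i<d. \<Sum>j<d. (\<Sum>x\<in>A. w x * x i * x j)\<^sup>2)"
proof -
  have sq: "(dot d x y)\<^sup>2 = (\<Sum>i<d. \<Sum>j<d. (x i * x j) * (y i * y j))" for x y :: "nat \<Rightarrow> real"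
    unfolding dot_def power2_eq_square sum_product by (simp add: algebra_simps)
  have "(\<Sum>x\<in>A. \<Sum>y\<in>A. w x * (dot d x y)\<^sup>2 * w y)
      = (\<Sum>x\<in>A. \<Sum>y\<in>A. \<Sum>i<d. \<Sum>j<d. (w x * x i * x j) * (w y * y i * y j))"
    unfolding sq by (simp add: sum_distrib_left sum_distrib_right algebra_simps)
  also have "\<dots> = (\<Sum>i<d. \<Sum>j<d. \<Sum>x\<in>A. \<Sum>y\<in>A. (w x * x i * x j) * (w y * y i * y j))"
    by (simp add: sum.swap[of _ A "{..<d}"])
  also have "\<dots> = (\<Sum>i<d. \<Sum>j<d. (\<Sum>x\<in>A. w x * x i * x j)\<^sup>2)"
    by (simp add: power2_eq_square sum_product)
  finally show ?thesis .
qed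

section \<open>Realising a configuration in \<open>\<complex>^n\<close>\<close>

definition coord_index :: "'n::finite \<Rightarrow> nat" where
  "coord_index = (SOME f. bij_betw f UNIV {..<CARD('n)})"

definition complexify :: "(nat \<Rightarrow> real) \<Rightarrow> complex ^ 'n::finite" where
  "complexify x = (\<chi> i. complex_of_real (x (coord_index i)))"

lemma bij_coord_index: "bij_betw (coord_index :: 'n::finite \<Rightarrow> nat) UNIV {..<CARD('n)}"
proof -
  obtain f :: "'n \<Rightarrow> nat" where "bij_betw f UNIV {..<CARD('n)}"
    using ex_bij_betw_finite_nat[of "UNIV :: 'n set"] by (auto simp: atLeast0LessThan)
  then show ?thesis
    unfolding coord_index_def by (rule someI[where P = "\<lambda>g. bij_betw g UNIV {..<CARD('n)}"])
qed

lemma cinner_complexify: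
  "cinner (complexify x) (complexify y :: complex ^ 'n::finite) = of_real (dot CARD('n) x y)"
proof -
  have "cinner (complexify x) (complexify y :: complex ^ 'n)
      = (\<Sum>i\<in>(UNIV :: 'n set). complex_of_real (x (coord_index i) * y (coord_index i)))"
    unfolding cinner_def complexify_def by simp
  also have "\<dots> = of_real (\<Sum>j<CARD('n). x j * y j)"
    using sum.reindex_bij_betw[OF bij_coord_index, of "\<lambda>j. complex_of_real (x j * y j)"] by simp
  finally show ?thesis unfolding dot_def .
qed

lemma complexify_eq_scale_imp:
  assumes "supported CARD('n) x" "supported CARD('n) y"
    and eq: "complexify x = c *s (complexify y :: complex ^ 'n::finite)"
  shows "x = (\<lambda>j. Re c * y j)"
proof
  fix j show "x j = Re c * y j"
  proof (cases "j < CARD('n)")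
    case True
    then have "j \<in> coord_index ` (UNIV :: 'n set)"
      using bij_coord_index[where 'n = 'n] unfolding bij_betw_def by simp
    then obtain i :: 'n where "coord_index i = j" by blast
    moreover have "complexify x $ i = c * complexify y $ i" using eq by simp
    ultimately have "Re (complex_of_real (x j)) = Re (c * complex_of_real (y j))"
      unfolding complexify_def by simp
    then show ?thesis by simp
  next
    case False
    then show ?thesis using assms(1,2) unfolding supported_def by simp
  qed
qed

lemma inj_on_complexify:
  assumes "unit_rays CARD('n) A"
  shows "inj_on (complexify :: _ \<Rightarrow> complex ^ 'n::finite) A"
proof
  fix x y assume "x \<in> A" "y \<in> A" "(complexify x :: complex ^ 'n) = complexify y"
  then show "x = y"
    using complexify_eq_scale_imp[where 'n = 'n, of x y 1] unit_rays_supported[OF assms] by simp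
qed

lemma card_complexify:
  "unit_rays CARD('n) A \<Longrightarrow> card (complexify ` A :: (complex ^ 'n::finite) set) = card A"
  by (rule card_image[OF inj_on_complexify])

lemma distinct_projectors_complexify:
  assumes A: "unit_rays CARD('n) A"
  shows "distinct_projectors (complexify ` A :: (complex ^ 'n::finite) set)"
  unfolding distinct_projectors_def
proof (intro ballI allI impI)
  fix u v :: "complex ^ 'n" and c assume "u \<in> complexify ` A" "v \<in> complexify ` A" and uv: "u = c *s v"
  then obtain x y where xy: "x \<in> A" "y \<in> A" "u = complexify x" "v = complexify y" by auto
  then have "x = (\<lambda>j. Re c * y j)"
    using complexify_eq_scale_imp[where 'n = 'n, of x y c] uv unit_rays_supported[OF A] by simp
  then have "x = y" using unit_rays_proportional_eq[OF A xy(1,2)] by simp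
  then show "u = v" using xy by simp
qed

lemma KS_set_complexify:
  assumes A: "unit_rays CARD('n) A" and KS: "KS_uncolorable CARD('n) A"
  shows "KS_set (complexify ` A :: (complex ^ 'n::finite) set)"
  unfolding KS_set_def
proof (intro conjI notI)
  let ?S = "complexify ` A :: (complex ^ 'n) set"
  show "finite ?S" using unit_rays_finite[OF A] by simp
  show unit: "\<forall>v\<in>?S. unit_vec v"
    using unit_rays_dot_self[OF A] by (simp add: unit_vec_def cinner_complexify)
  assume "\<exists>f. coloring ?S f"
  then obtain f where "coloring ?S f" by blast
  then have basis_sum: "\<forall>B. B \<subseteq> ?S \<and> onb B \<longrightarrow> sum f B = 1" unfolding coloring_def by (elim conjE)
  have "sum (f \<circ> complexify) C = 1" if C: "basis_in CARD('n) A C" for C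
  proof -
    have CA: "C \<subseteq> A" using C unfolding basis_in_def by simp
    have inj: "inj_on (complexify :: _ \<Rightarrow> complex ^ 'n) C"
      using inj_on_subset[OF inj_on_complexify[OF A] CA] .
    have "onb (complexify ` C :: (complex ^ 'n) set)"
      unfolding onb_def
    proof (intro conjI)
      show "\<forall>v\<in>complexify ` C. unit_vec (v :: complex ^ 'n)" using unit CA by auto
      show "mutually_orth (complexify ` C :: (complex ^ 'n) set)"
        using C unfolding mutually_orth_def corth_def basis_in_def pairwise_orth_def
        by (auto simp: cinner_complexify)
      show "finite (complexify ` C :: (complex ^ 'n) set)"
        using finite_subset[OF CA unit_rays_finite[OF A]] by simp
      show "card (complexify ` C :: (complex ^ 'n) set) = CARD('n)"
        using card_image[OF inj] C unfolding basis_in_def by simp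
    qed
    then have "sum f (complexify ` C) = 1" using basis_sum CA by blast
    then show ?thesis by (simp add: sum.reindex[OF inj])
  qed
  then show False using KS unfolding KS_uncolorable_def by blast
qed

lemma indep_number_complexify_le:
  assumes A: "unit_rays CARD('n) A" and iA: "indep_le CARD('n) A m"
  shows "indep_number (complexify ` A :: (complex ^ 'n::finite) set) orth_edge \<le> m"
  unfolding indep_number_def
proof (rule Max.boundedI)
  let ?S = "complexify ` A :: (complex ^ 'n) set"
  have finS: "finite ?S" using unit_rays_finite[OF A] by simp
  show "finite {card I |I. I \<subseteq> ?S \<and> (\<forall>u\<in>I. \<forall>v\<in>I. \<not> orth_edge u v)}"
  proof (rule finite_subset[of _ "{..card ?S}"])
    show "{card I |I. I \<subseteq> ?S \<and> (\<forall>u\<in>I. \<forall>v\<in>I. \<not> orth_edge u v)} \<subseteq> {..card ?S}"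
      using card_mono[OF finS] by auto
  qed simp
  show "{card I |I. I \<subseteq> ?S \<and> (\<forall>u\<in>I. \<forall>v\<in>I. \<not> orth_edge u v)} \<noteq> {}" by auto
  fix k assume "k \<in> {card I |I. I \<subseteq> ?S \<and> (\<forall>u\<in>I. \<forall>v\<in>I. \<not> orth_edge u v)}"
  then obtain I where I: "k = card I" "I \<subseteq> ?S" "\<forall>u\<in>I. \<forall>v\<in>I. \<not> orth_edge u v" by blast
  define J where "J = {x \<in> A. (complexify x :: complex ^ 'n) \<in> I}"
  have JA: "J \<subseteq> A" unfolding J_def by auto
  have injJ: "inj_on (complexify :: _ \<Rightarrow> complex ^ 'n) J"
    by (rule inj_on_subset[OF inj_on_complexify[OF A] JA])
  have "I = complexify ` J" using I(2) unfolding J_def by auto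
  then have "card I = card J" using card_image[OF injJ] by simp
  moreover have "pairwise_nonorth CARD('n) J"
    unfolding pairwise_nonorth_def
  proof (intro ballI impI)
    fix x y assume xy: "x \<in> J" "y \<in> J" "x \<noteq> y"
    then have "(complexify x :: complex ^ 'n) \<noteq> complexify y"
      using injJ unfolding inj_on_def by blast
    moreover have "(complexify x :: complex ^ 'n) \<in> I" "(complexify y :: complex ^ 'n) \<in> I"
      using xy unfolding J_def by auto
    ultimately have "\<not> corth (complexify x :: complex ^ 'n) (complexify y)"
      using I(3) unfolding orth_edge_def by blast
    then show "dot CARD('n) x y \<noteq> 0" unfolding corth_def by (simp add: cinner_complexify)
  qed
  ultimately show "k \<le> m" using iA JA I(1) unfolding indep_le_def by auto
qed

lemma sum_entries_complexify_le_cover: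
  assumes A: "unit_rays CARD('n) A" and cA: "orth_cover CARD('n) A W" and "0 < W"
    and X: "theta_feasible (complexify ` A :: (complex ^ 'n::finite) set) orth_edge X"
  shows "(\<Sum>u\<in>complexify ` A. \<Sum>v\<in>complexify ` A. X u v) \<le> W"
proof -
  obtain K :: "nat set" and cl and wt :: "nat \<Rightarrow> real"
    where cv: "finite K" "\<forall>k\<in>K. cl k \<subseteq> A \<and> pairwise_orth CARD('n) (cl k) \<and> 0 \<le> wt k"
      "\<forall>x\<in>A. (\<Sum>k\<in>{k\<in>K. x \<in> cl k}. wt k) = 1" "(\<Sum>k\<in>K. wt k) = W"
    using cA unfolding orth_cover_def by blast
  have inj: "inj_on (complexify :: _ \<Rightarrow> complex ^ 'n) A" by (rule inj_on_complexify[OF A])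
  show ?thesis
  proof (rule sum_entries_le_cover_weight[where K = K and cl = "\<lambda>k. complexify ` cl k" and wt = wt])
    show "finite (complexify ` A :: (complex ^ 'n) set)" using unit_rays_finite[OF A] by simp
    show "X u v = 0"
      if k: "k \<in> K" and u: "u \<in> complexify ` cl k" and v: "v \<in> complexify ` cl k" and "u \<noteq> v"
      for k and u v :: "complex ^ 'n"
    proof -
      obtain x y where xy: "x \<in> cl k" "y \<in> cl k" "u = complexify x" "v = complexify y"
        using u v by auto
      then have "x \<noteq> y" using \<open>u \<noteq> v\<close> by blast
      then have "dot CARD('n) x y = 0" using cv(2) k xy(1,2) unfolding pairwise_orth_def by blast
      then have "orth_edge u v" using xy \<open>u \<noteq> v\<close> by (simp add: orth_edge_def corth_def cinner_complexify)
      moreover have "u \<in> complexify ` A" "v \<in> complexify ` A" using xy cv(2) k by auto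
      ultimately show ?thesis using X unfolding theta_feasible_def by blast
    qed
    show "(\<Sum>k\<in>{k \<in> K. u \<in> complexify ` cl k}. wt k) = 1" if u: "u \<in> complexify ` A"
      for u :: "complex ^ 'n"
    proof -
      obtain x where x: "x \<in> A" "u = complexify x" using u by auto
      then have "{k \<in> K. u \<in> complexify ` cl k} = {k \<in> K. x \<in> cl k}"
        using cv(2) inj unfolding inj_on_def by blast
      then show ?thesis using cv(3) x by simp
    qed
  qed (use cv \<open>0 < W\<close> X in \<open>auto simp: theta_feasible_def\<close>)
qed

text \<open>The tight frame gives the primal witness \<open>X u v = (u\<bullet>v)\<^sup>2 / |A|\<close>: it is a Gram-type matrix,
  hence positive semidefinite, and its entries sum to \<open>\<Sum>\<^sub>i\<^sub>j (\<Sum>\<^sub>x x\<^sub>i x\<^sub>j)\<^sup>2 / |A| = n W\<^sup>2 / |A| = W\<close>.\<close>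

lemma theta_feasible_tight_frame:
  assumes A: "unit_rays CARD('n) A" and fA: "tight_frame CARD('n) A W" and "0 < W"
  defines "S \<equiv> complexify ` A :: (complex ^ 'n::finite) set"
  defines "X \<equiv> \<lambda>u v. (Re (cinner u v))\<^sup>2 / real (card S)"
  shows "theta_feasible S orth_edge X" and "(\<Sum>u\<in>S. \<Sum>v\<in>S. X u v) = W"
proof -
  let ?n = "CARD('n)"
  have finA: "finite A" by (rule unit_rays_finite[OF A])
  have cardS: "real (card S) = W * ?n"
    unfolding S_def card_complexify[OF A] using card_tight_frame[OF A fA] .
  then have N: "0 < real (card S)" using \<open>0 < W\<close> by simp
  have X_complexify: "X (complexify x) (complexify y) = (dot ?n x y)\<^sup>2 / card S" for x y
    unfolding X_def by (simp add: cinner_complexify)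
  have sum_S: "(\<Sum>u\<in>S. \<Sum>v\<in>S. h u v) = (\<Sum>x\<in>A. \<Sum>y\<in>A. h (complexify x) (complexify y))" for h
    unfolding S_def by (simp add: sum.reindex[OF inj_on_complexify[OF A]])
  have psd: "0 \<le> (\<Sum>u\<in>S. \<Sum>v\<in>S. z u * X u v * z v)" for z
  proof -
    have "(\<Sum>u\<in>S. \<Sum>v\<in>S. z u * X u v * z v)
        = (\<Sum>x\<in>A. \<Sum>y\<in>A. z (complexify x) * (dot ?n x y)\<^sup>2 * z (complexify y)) / card S"
      by (simp add: sum_S X_complexify sum_divide_distrib)
    also have "\<dots> = (\<Sum>i<?n. \<Sum>j<?n. (\<Sum>x\<in>A. z (complexify x) * x i * x j)\<^sup>2) / card S"
      by (simp only: sum_dot_sq_eq_sum_sq)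
    finally show ?thesis by (simp add: sum_nonneg)
  qed
  have "(\<Sum>u\<in>S. X u u) = (\<Sum>u\<in>S. 1 / card S)"
    using unit_rays_dot_self[OF A] by (intro sum.cong) (auto simp: S_def X_complexify)
  then have trace: "(\<Sum>u\<in>S. X u u) = 1" using N by simp
  have "X u v = X v u" if "u \<in> S" "v \<in> S" for u v
    using that by (auto simp: S_def X_complexify dot_commute)
  moreover have "X u v = 0" if "orth_edge u v" for u v
    using that by (simp add: X_def orth_edge_def corth_def)
  ultimately show "theta_feasible S orth_edge X"
    unfolding theta_feasible_def using psd trace by blast
  have "(\<Sum>u\<in>S. \<Sum>v\<in>S. X u v) = (\<Sum>x\<in>A. \<Sum>y\<in>A. 1 * (dot ?n x y)\<^sup>2 * 1) / card S"
    by (simp add: sum_S X_complexify sum_divide_distrib)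
  also have "\<dots> = (\<Sum>i<?n. \<Sum>j<?n. (\<Sum>x\<in>A. 1 * x i * x j)\<^sup>2) / card S"
    by (simp only: sum_dot_sq_eq_sum_sq)
  also have "\<dots> = (\<Sum>i<?n. \<Sum>j<?n. if i = j then W\<^sup>2 else 0) / card S"
    using fA unfolding tight_frame_def by (intro arg_cong[where f = "\<lambda>t. t / _"] sum.cong refl) auto
  also have "\<dots> = W"
    using cardS N by (simp add: power2_eq_square)
  finally show "(\<Sum>u\<in>S. \<Sum>v\<in>S. X u v) = W" .
qed

lemma lovasz_theta_complexify:
  assumes "unit_rays CARD('n) A" "tight_frame CARD('n) A W" "orth_cover CARD('n) A W" "0 < W"
  shows "lovasz_theta (complexify ` A :: (complex ^ 'n::finite) set) orth_edge = W"
  using theta_feasible_tight_frame[OF assms(1,2,4)] sum_entries_complexify_le_cover[OF assms(1,3,4)]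
  by (rule lovasz_theta_eqI)

section \<open>The construction\<close>

text \<open>Realised in \<open>\<complex>^d\<close>, a balanced configuration has theta number exactly \<open>w\<close>.\<close>

definition balanced_config :: "nat \<Rightarrow> (nat \<Rightarrow> real) set \<Rightarrow> real \<Rightarrow> nat \<Rightarrow> bool" where
  "balanced_config d A w m \<longleftrightarrow>
     unit_rays d A \<and> tight_frame d A w \<and> orth_cover d A w \<and> indep_le d A m"

lemma balanced_config_unit_rays: "balanced_config d A w m \<Longrightarrow> unit_rays d A"
  by (simp add: balanced_config_def)

lemma balanced_config_kron_set:
  assumes "0 < b" "balanced_config a A wa ma" "balanced_config b B wb mb"
  shows "balanced_config (a*b) (kron_set b A B) (wa * wb) (ma * mb)"
proof -
  have "unit_rays a A" "tight_frame a A wa" "orth_cover a A wa" "indep_le a A ma"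
    and "unit_rays b B" "tight_frame b B wb" "orth_cover b B wb" "indep_le b B mb"
    using assms(2,3) unfolding balanced_config_def by auto
  then show ?thesis
    unfolding balanced_config_def
    using unit_rays_kron_set tight_frame_kron_set orth_cover_kron_set indep_le_kron_set assms(1)
    by simp
qed

lemma balanced_config_Un:
  assumes "balanced_config d A w m" "balanced_config d A' w' m'"
    and not_prop: "\<And>x y c. x \<in> A \<Longrightarrow> y \<in> A' \<Longrightarrow> x \<noteq> (\<lambda>i. c * y i)"
    and not_prop': "\<And>x y c. x \<in> A' \<Longrightarrow> y \<in> A \<Longrightarrow> x \<noteq> (\<lambda>i. c * y i)"
  shows "balanced_config d (A \<union> A') (w + w') (m + m')"
proof -
  have disj: "A \<inter> A' = {}" using not_prop[where c = 1] by auto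
  have A: "unit_rays d A" "tight_frame d A w" "orth_cover d A w" "indep_le d A m"
    and A': "unit_rays d A'" "tight_frame d A' w'" "orth_cover d A' w'" "indep_le d A' m'"
    using assms(1,2) unfolding balanced_config_def by auto
  show ?thesis
    unfolding balanced_config_def
    using unit_rays_Un[OF A(1) A'(1) not_prop not_prop']
      tight_frame_Un[OF unit_rays_finite[OF A(1)] unit_rays_finite[OF A'(1)] disj A(2) A'(2)]
      orth_cover_Un[OF disj A(3) A'(3)] indep_le_Un[OF A(4) A'(4)]
    by blast
qed

lemma balanced_config_std_basis: "balanced_config d (std_basis d) 1 1"
  unfolding balanced_config_def
  using unit_rays_std_basis tight_frame_std_basis orth_cover_std_basis indep_le_std_basis by blast

lemma balanced_config_rot_bases: "finite T \<Longrightarrow> balanced_config 2 (rot_bases T) (card T) (card T)"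
  unfolding balanced_config_def
  using unit_rays_rot_bases tight_frame_rot_bases orth_cover_rot_bases indep_le_rot_bases by blast

lemma balanced_config_cabello: "balanced_config 4 cabello (9/2) 4"
  unfolding balanced_config_def
  using unit_rays_cabello tight_frame_cabello orth_cover_cabello indep_le_cabello by blast

lemma kron_rot_bases_not_proportional:
  assumes L: "unit_rays D L" and "T \<inter> T' = {}"
    and x: "x \<in> kron_set 2 L (rot_bases T)" and y: "y \<in> kron_set 2 L' (rot_bases T')"
  shows "x \<noteq> (\<lambda>i. c * y i)"
proof
  assume eq: "x = (\<lambda>i. c * y i)"
  obtain l t s where l: "l \<in> L" "t \<in> T" "x = kron 2 l (rot_vec t s)"
    using x unfolding rot_bases_def by (auto elim!: kron_setE)
  obtain l' t' s' where "t' \<in> T'" "y = kron 2 l' (rot_vec t' s')"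
    using y unfolding rot_bases_def by (auto elim!: kron_setE)
  then have "kron 2 l (rot_vec t s) = (\<lambda>i. c * kron 2 l' (rot_vec t' s') i)" using eq l by simp
  then obtain e where "rot_vec t s = (\<lambda>q. e * rot_vec t' s' q)"
    using kron_proportional_right[of 2 "rot_vec t s" "rot_vec t' s'" D l c l']
      unit_rays_dot_self[OF L l(1)] by (auto simp: supported_def rot_vec_def)
  then have "t = t'" using rot_vec_proportional by blast
  then show False using \<open>t \<in> T\<close> \<open>t' \<in> T'\<close> \<open>T \<inter> T' = {}\<close> by blast
qed

fun cabello_pad :: "nat \<Rightarrow> nat \<Rightarrow> (nat \<Rightarrow> real) set" where
  "cabello_pad h 0 = std_basis h"
| "cabello_pad h (Suc j) = kron_set (4^j * h) cabello (cabello_pad h j)"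

lemma balanced_config_cabello_pad:
  assumes "0 < h"
  shows "balanced_config (4^j * h) (cabello_pad h j) ((9/2)^j) (4^j)
    \<and> has_basis_in (4^j * h) (cabello_pad h j)"
proof (induction j)
  case 0
  then show ?case using balanced_config_std_basis has_basis_in_std_basis by simp
next
  case (Suc j)
  have b: "0 < 4^j * h" using assms by simp
  have IH: "balanced_config (4^j * h) (cabello_pad h j) ((9/2)^j) (4^j)"
    "has_basis_in (4^j * h) (cabello_pad h j)" using Suc by auto
  show ?case
    using balanced_config_kron_set[OF b balanced_config_cabello IH(1)]
      has_basis_in_kron_set[OF b unit_rays_cabello balanced_config_unit_rays[OF IH(1)]
        has_basis_in_cabello IH(2)]
    by (simp add: mult.assoc)
qed

lemma KS_uncolorable_cabello_pad:
  assumes "0 < h" "0 < j"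
  shows "KS_uncolorable (4^j * h) (cabello_pad h j)"
proof -
  obtain i where j: "j = Suc i" using assms(2) gr0_implies_Suc by blast
  have b: "0 < 4^i * h" using assms by simp
  have "balanced_config (4^i * h) (cabello_pad h i) ((9/2)^i) (4^i)"
    "has_basis_in (4^i * h) (cabello_pad h i)" using balanced_config_cabello_pad[OF assms(1)] by auto
  then show ?thesis unfolding j
    using KS_uncolorable_kron_set[OF b unit_rays_cabello balanced_config_unit_rays
        KS_uncolorable_cabello has_basis_in_cabello]
    by (simp add: mult.assoc)
qed

text \<open>Write \<open>N = 9^8 q + r\<close> with \<open>r < 9^8\<close>. The set \<open>cabello_pad h 8 \<otimes> P\<^sub>a\<close>, with \<open>a = 2^8 q\<close> plane bases,
  has weight \<open>(9/2)^8 a = 9^8 q\<close>; the set \<open>E \<otimes> P\<^sub>r\<close> with \<open>r\<close> further plane bases adds weight \<open>r\<close>.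
  Non-orthogonal families have at most \<open>4^8 a + r = 2^24 q + r\<close> elements, which is at most \<open>N/2\<close> since
  \<open>2^25 < 9^8\<close> and \<open>q \<ge> 5\<close> absorbs \<open>r\<close>.\<close>

lemma config_of_weight:
  fixes h N :: nat
  assumes "0 < h" and "5 * 9^8 \<le> N"
  obtains A m where "balanced_config (2^17 * h) A N m" "KS_uncolorable (2^17 * h) A" "2 * m \<le> N"
proof -
  define q r where "q = N div 9^8" and "r = N mod 9^8"
  define a where "a = 2^8 * q"
  define D where "D = 4^8 * h"
  have N: "N = 9^8 * q + r" and r: "r < 9^8" unfolding q_def r_def by simp_all
  have q: "5 \<le> q" using div_le_mono[OF assms(2), of "9^8"] unfolding q_def by simp
  have L: "balanced_config D (cabello_pad h 8) ((9/2)^8) (4^8)" "has_basis_in D (cabello_pad h 8)"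
    using balanced_config_cabello_pad[OF assms(1), of 8] unfolding D_def by auto
  have uL: "unit_rays D (cabello_pad h 8)" by (rule balanced_config_unit_rays[OF L(1)])
  have KS_L: "KS_uncolorable D (cabello_pad h 8)"
    using KS_uncolorable_cabello_pad[OF assms(1), of 8] unfolding D_def by simp
  define A1 where "A1 = kron_set 2 (cabello_pad h 8) (rot_bases {..<a})"
  define A2 where "A2 = kron_set 2 (std_basis D) (rot_bases {a..<a+r})"
  have A1: "balanced_config (D*2) A1 ((9/2)^8 * a) (4^8 * a)"
    using balanced_config_kron_set[OF _ L(1) balanced_config_rot_bases[of "{..<a}"]]
    unfolding A1_def by simp
  have A2: "balanced_config (D*2) A2 r r"
    using balanced_config_kron_set[OF _ balanced_config_std_basis balanced_config_rot_bases[of "{a..<a+r}"]]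
    unfolding A2_def by simp
  have "balanced_config (D*2) (A1 \<union> A2) ((9/2)^8 * a + r) (4^8 * a + r)"
  proof (rule balanced_config_Un[OF A1 A2])
    show "x \<noteq> (\<lambda>i. c * y i)" if "x \<in> A1" "y \<in> A2" for x y c
      by (rule kron_rot_bases_not_proportional[OF uL, where T = "{..<a}" and T' = "{a..<a+r}"])
        (use that in \<open>auto simp: A1_def A2_def\<close>)
    show "x \<noteq> (\<lambda>i. c * y i)" if "x \<in> A2" "y \<in> A1" for x y c
      by (rule kron_rot_bases_not_proportional[OF unit_rays_std_basis,
            where T = "{a..<a+r}" and T' = "{..<a}"])
        (use that in \<open>auto simp: A1_def A2_def\<close>)
  qed
  moreover have "(9/2)^8 * real a + real r = real N"
    unfolding a_def N by (simp add: power_divide)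
  moreover have "KS_uncolorable (D*2) A1"
    using KS_uncolorable_kron_set[OF _ uL unit_rays_rot_bases KS_L L(2) has_basis_in_rot_bases[of 0]] q
    unfolding A1_def a_def by simp
  then have "KS_uncolorable (D*2) (A1 \<union> A2)" by (rule KS_uncolorable_mono) blast
  moreover have "2 * (4^8 * a + r) \<le> N" using q r unfolding a_def N by simp
  moreover have "D * 2 = 2^17 * h" unfolding D_def by simp
  ultimately show ?thesis using that by simp
qed

lemma complexify_balanced_config:
  assumes A: "balanced_config CARD('n) A w m" and KS: "KS_uncolorable CARD('n) A" and "0 < w"
  defines "S \<equiv> complexify ` A :: (complex ^ 'n::finite) set"
  shows "KS_proof S \<and> distinct_projectors S \<and> real (card S) = w * CARD('n)
    \<and> lovasz_theta S orth_edge = w \<and> indep_number S orth_edge \<le> m"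
proof -
  have uA: "unit_rays CARD('n) A" and fA: "tight_frame CARD('n) A w"
    and cA: "orth_cover CARD('n) A w" and iA: "indep_le CARD('n) A m"
    using A unfolding balanced_config_def by auto
  show ?thesis
    unfolding S_def KS_proof_def
    using KS_set_complexify[OF uA KS] distinct_projectors_complexify[OF uA]
      card_complexify[OF uA] card_tight_frame[OF uA fA] lovasz_theta_complexify[OF uA fA cA \<open>0 < w\<close>]
      indep_number_complexify_le[OF uA iA]
    by simp
qed

lemma pow2_ge_plus_30: "17 \<le> k \<Longrightarrow> k + 30 \<le> (2::nat)^k"
proof (induction k rule: dec_induct)
  case base
  then show ?case by simp
next
  case (step k)
  then show ?case by simp
qed

lemma dyadic_weight:
  fixes n k :: nat
  assumes n: "n = 2^k" and k: "17 \<le> k"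
  shows "5 * 9^8 \<le> (2^(n-1-k) + 2^(k-1) :: nat)"
    and "real (2^(n-1-k) + 2^(k-1)) = 2^(n-1) / real n + real n / 2"
proof -
  have big: "k + 30 \<le> n" using pow2_ge_plus_30[OF k] n by simp
  have "(2::nat)^29 \<le> 2^(n-1-k)" using big by (intro power_increasing) auto
  then show "5 * 9^8 \<le> (2^(n-1-k) + 2^(k-1) :: nat)" by simp
  have "(2::real)^(n-1) = 2^(n-1-k) * 2^k" using big by (simp add: power_add[symmetric])
  moreover have "(2::real)^k = 2^(k-1) * 2" using k by (cases k) auto
  ultimately show "real (2^(n-1-k) + 2^(k-1)) = 2^(n-1) / real n + real n / 2"
    using n by simp
qed

lemma half_le_theta_bound:
  fixes n :: nat and W :: real
  assumes "1 \<le> n" "0 \<le> W"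
  shows "W / 2 \<le> (1 / 2 + 8 * sqrt (real n) * log 2 (real n) / (real n - 1)) * W"
proof -
  have "0 \<le> 8 * sqrt (real n) * log 2 (real n) / (real n - 1)" using assms(1) by simp
  then have "0 \<le> 8 * sqrt (real n) * log 2 (real n) / (real n - 1) * W"
    using assms(2) by (rule mult_nonneg_nonneg)
  then show ?thesis unfolding distrib_right by linarith
qed

theorem mainTheorem1:
  fixes n k :: nat
  assumes "CARD('n) = n" and "n = 2 ^ k" and "n \<ge> 2 ^ 17"
  shows "\<exists>S :: (complex ^ 'n) set.
           KS_proof S \<and> distinct_projectors S
         \<and> real (card S) = 2 ^ (n - 1) + real n ^ 2 / 2
         \<and> lovasz_theta S orth_edge = 2 ^ (n - 1) / real n + real n / 2
         \<and> real (indep_number S orth_edge)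
             \<le> (1 / 2 + 8 * sqrt (real n) * log 2 (real n) / (real n - 1))
                * (2 ^ (n - 1) / real n + real n / 2)"
proof -
  have k: "17 \<le> k" using assms(2,3) power_le_imp_le_exp[of "2::nat" 17 k] by simp
  define N :: nat where "N = 2^(n-1-k) + 2^(k-1)"
  have N: "5 * 9^8 \<le> N" "real N = 2 ^ (n - 1) / real n + real n / 2"
    using dyadic_weight[OF assms(2) k] unfolding N_def by auto
  have "2^17 * 2^(k-17) = CARD('n)" using assms(1,2) k power_add[of "2::nat" 17 "k-17"] by simp
  then obtain A m where A: "balanced_config CARD('n) A N m" "KS_uncolorable CARD('n) A" "2 * m \<le> N"
    using config_of_weight[of "2^(k-17)" N] N(1) by auto
  define S where "S = (complexify ` A :: (complex ^ 'n) set)"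
  have "0 < real N" using N(1) by simp
  then have S: "KS_proof S" "distinct_projectors S" "real (card S) = real N * real n"
    "lovasz_theta S orth_edge = real N" "indep_number S orth_edge \<le> m"
    using complexify_balanced_config[OF A(1,2)] assms(1) unfolding S_def by auto
  have "real N * real n = 2 ^ (n - 1) + real n ^ 2 / 2"
    using N(2) assms(2) by (simp add: field_simps power2_eq_square)
  moreover have "real (indep_number S orth_edge) \<le> real N / 2" using S(5) A(3) by linarith
  moreover have "\<dots> \<le> (1 / 2 + 8 * sqrt (real n) * log 2 (real n) / (real n - 1)) * real N"
    using assms(2) by (intro half_le_theta_bound) simp_all
  ultimately show ?thesis using S(1-4) N(2) by (intro exI[of _ S]) auto
qed

end
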